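(* Let $Y$ be a real Banach space. Then for every $\varepsilon>0$: if $f\in\mathrm{Lip}_{0\mathcal K}(\mathbb R,Y)$ with $\|f\|=1$ and $t_1<t_2$ in $\mathbb R$ satisfy $\frac{\|f(t_1)-f(t_2)\|}{|t_1-t_2|}>1-\varepsilon$, then there exist $g\in\mathrm{Lip}_{0\mathcal K}(\mathbb R,Y)$ with $\|g\|=1$ and $t_0\in[t_1,t_2]$ such that $g$ is differentiable at $t_0$ with $\|g'(t_0)\|=1$ and $\|f-g\|<\varepsilon$.
   Context: $\mathrm{Lip}_0(\mathbb R,Y)$ is the Banach space of Lipschitz maps $f\colon\mathbb R\to Y$ with $f(0)=0$, with norm $\|f\|=\sup_{s\neq t}\|f(s)-f(t)\|/|s-t|$; $\mathrm{Lip}_{0\mathcal K}(\mathbb R,Y)$ is the subspace of those $f$ whose set of slopes $\{\frac{f(s)-f(t)}{s-t}:s\neq t\}$ is relatively compact in $Y$. *)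

theory Defs
  imports "HOL-Analysis.Analysis"
begin

definition slopes :: "(real \<Rightarrow> 'a::real_normed_vector) \<Rightarrow> 'a set" where
  "slopes f = {(f s - f t) /\<^sub>R (s - t) | s t. s \<noteq> t}"

definition Lip0 :: "(real \<Rightarrow> 'a::real_normed_vector) set" where
  "Lip0 = {f. (\<exists>L. L\<ge>0 \<and> lipschitz_on L UNIV f) \<and> f 0 = 0}"

definition lip_norm :: "(real \<Rightarrow> 'a::real_normed_vector) \<Rightarrow> real" where
  "lip_norm f = (SUP p \<in> {(s,t). s \<noteq> t}. norm (f (fst p) - f (snd p)) / \<bar>fst p - snd p\<bar>)"

definition Lip0K :: "(real \<Rightarrow> 'a::real_normed_vector) set" where
  "Lip0K = {f \<in> Lip0. compact (closure (slopes f))}"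

end

theory Submission
  imports Defs
begin

text \<open>
  Since the slopes of \<open>f\<close> lie in a compact set, the dyadic difference quotients of \<open>f\<close>, viewed
  as step functions, form a Cauchy sequence in \<open>L\<^sup>1\<close> on every bounded interval: over a finite
  \<open>\<eta>\<close>-net \<open>C\<close> of the slopes, the bounded increasing quantities \<open>\<Sum>c\<in>C. \<integral>\<parallel>D\<^sub>n - c\<parallel>\<close> control
  \<open>\<integral>\<parallel>D\<^sub>n\<^sub>+\<^sub>p - D\<^sub>n\<parallel>\<close> up to \<open>\<eta>\<close>. A fast subsequence converges almost everywhere to a derivative
  \<open>F\<close> with \<open>\<parallel>f t - f s\<parallel> \<le> \<integral>\<^sub>s\<^sup>t \<parallel>F\<parallel>\<close>.

  Let \<open>\<rho>\<close> be a continuous map into the unit ball that moves points of the unit ball by at most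
  \<open>\<kappa> < \<epsilon>\<close>. The primitive \<open>g\<close> of \<open>\<rho> \<circ> F\<close>, continued by the increments of \<open>f\<close> outside a large
  interval, satisfies \<open>\<parallel>f - g\<parallel> \<le> \<kappa>\<close>; its slopes lie in the compact closed convex hull of the
  slopes of \<open>f\<close> and their images under \<open>\<rho>\<close>; and \<open>g' t\<^sub>0 = \<rho> (F t\<^sub>0)\<close> at almost every \<open>t\<^sub>0\<close>,
  namely wherever \<open>\<rho> \<circ> F\<close> is approximately continuous. It remains to choose \<open>\<rho>\<close> so that
  \<open>\<parallel>\<rho> (F t\<^sub>0)\<parallel> = 1\<close> for some such \<open>t\<^sub>0 \<in> [t\<^sub>1, t\<^sub>2]\<close>. If \<open>\<parallel>F\<parallel> \<ge> \<beta>\<close> on a non-null part of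
  \<open>[t\<^sub>1, t\<^sub>2]\<close> for some \<open>max 0 (1 - \<epsilon>) < \<beta> < 1\<close>, stretch radially by \<open>1/\<beta>\<close> and truncate at the
  unit sphere (\<open>\<kappa> = 1 - \<beta>\<close>). Otherwise \<open>\<parallel>f t\<^sub>2 - f t\<^sub>1\<parallel> \<le> \<integral>\<parallel>F\<parallel>\<close> forces \<open>\<epsilon> > 1\<close> and \<open>F = 0\<close>
  almost everywhere on \<open>[t\<^sub>1, t\<^sub>2]\<close>, and \<open>\<rho> v = v + (1 - \<parallel>v\<parallel>) u\<close> on the unit ball, for a unit
  vector \<open>u\<close>, works with \<open>\<kappa> = 1\<close>.
\<close>

section \<open>Dyadic step functions\<close>

definition dyadic_step :: "nat \<Rightarrow> (int \<Rightarrow> 'a) \<Rightarrow> real \<Rightarrow> 'a" where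
  "dyadic_step n h x = h \<lfloor>2^n * x\<rfloor>"

lemma floor_pow2_mult_div:
  assumes "n \<le> m"
  shows "\<lfloor>(2::real)^n * x\<rfloor> = \<lfloor>(2::real)^m * x\<rfloor> div 2^(m-n)"
proof -
  have e: "(2::real)^m = 2^n * 2^(m-n)"
    using assms by (simp flip: power_add)
  have "(2::real)^m * x / real_of_int (2^(m-n)) = 2^n * x"
    by (simp only: e of_int_power of_int_numeral) simp
  then show ?thesis
    using floor_divide_real_eq_div[of "2^(m-n)" "2^m * x"] by simp
qed

lemma dyadic_step_eq_on_cell:
  assumes "real_of_int k / 2^n \<le> x" "x < real_of_int (k+1) / 2^n"
  shows "dyadic_step n h x = h k"
proof -
  from assms have "real_of_int k \<le> 2^n * x" "2^n * x < real_of_int k + 1"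
    by (auto simp: field_simps)
  then have "\<lfloor>2^n * x\<rfloor> = k" by linarith
  then show ?thesis by (simp add: dyadic_step_def)
qed

lemma integral_dyadic_step_in_cell:
  fixes h :: "int \<Rightarrow> 'a::banach"
  assumes "s \<le> t" "real_of_int k / 2^n \<le> s" "t \<le> real_of_int (k+1) / 2^n"
  shows "(dyadic_step n h has_integral (t - s) *\<^sub>R h k) {s..t}"
proof -
  have "dyadic_step n h x = h k" if "x \<in> {s..t} - {t}" for x
    using that assms by (intro dyadic_step_eq_on_cell) auto
  moreover have "((\<lambda>x. h k) has_integral (t - s) *\<^sub>R h k) {s..t}"
    using has_integral_const_real[of "h k" s t] assms(1) by simp
  ultimately show ?thesis
    by (rule has_integral_spike[OF negligible_sing])
qed

lemma has_integral_dyadic_step_grid: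
  fixes h :: "int \<Rightarrow> 'a::banach"
  assumes "k \<le> l"
  shows "(dyadic_step n h has_integral (\<Sum>i\<in>{k..<l}. (1/2^n) *\<^sub>R h i))
           {real_of_int k / 2^n .. real_of_int l / 2^n}"
  using assms
proof (induction l rule: int_ge_induct)
  case base
  show ?case using has_integral_refl(2)[of "dyadic_step n h" "real_of_int k / 2^n"] by simp
next
  case (step i)
  have a: "real_of_int k / 2^n \<le> real_of_int i / 2^n"
    using step.hyps by (simp add: divide_right_mono)
  have b: "real_of_int i / 2^n \<le> real_of_int (i+1) / 2^n"
    by (simp add: divide_right_mono)
  have "real_of_int (i+1) / 2^n - real_of_int i / 2^n = 1/2^n"
    by (simp add: field_simps)
  then have "(dyadic_step n h has_integral (1/2^n) *\<^sub>R h i) {real_of_int i / 2^n .. real_of_int (i+1) / 2^n}"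
    using integral_dyadic_step_in_cell[OF b order_refl order_refl, of h] by simp
  from has_integral_combine[OF a b step.IH this]
  have "(dyadic_step n h has_integral (\<Sum>i\<in>{k..<i}. (1/2^n) *\<^sub>R h i) + (1/2^n) *\<^sub>R h i)
          {real_of_int k / 2^n .. real_of_int (i+1) / 2^n}" .
  moreover have "{k..<i+1} = insert i {k..<i}" using step.hyps by auto
  ultimately show ?case by (simp add: add.commute)
qed

lemma integrable_dyadic_step: "dyadic_step n (h::int \<Rightarrow> 'a::banach) integrable_on {a..b}"
proof -
  define k where "k = \<lfloor>2^n * a\<rfloor>"
  define l where "l = max k \<lceil>2^n * b\<rceil>"
  have "dyadic_step n h integrable_on {real_of_int k / 2^n .. real_of_int l / 2^n}"
    using has_integral_dyadic_step_grid[of k l n h] by (auto simp: l_def)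
  moreover have "real_of_int k / 2^n \<le> a" "b \<le> real_of_int l / 2^n"
    unfolding k_def l_def by (simp_all add: field_simps) linarith+
  then have "{a..b} \<subseteq> {real_of_int k / 2^n .. real_of_int l / 2^n}"
    by auto
  ultimately show ?thesis
    by (rule integrable_on_subinterval)
qed

lemma integrable_dyadic_step_pair:
  "(\<lambda>x. (\<phi> (h1 \<lfloor>(2::real)^n1 * x\<rfloor>) (h2 \<lfloor>(2::real)^n2 * x\<rfloor>) :: 'b::banach)) integrable_on {a..b}"
proof -
  have "(\<lambda>x. \<phi> (h1 \<lfloor>(2::real)^n1 * x\<rfloor>) (h2 \<lfloor>(2::real)^n2 * x\<rfloor>)) =
      dyadic_step (max n1 n2) (\<lambda>i. \<phi> (h1 (i div 2^(max n1 n2 - n1))) (h2 (i div 2^(max n1 n2 - n2))))"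
    unfolding dyadic_step_def
    using floor_pow2_mult_div[of n1 "max n1 n2"] floor_pow2_mult_div[of n2 "max n1 n2"] by auto
  then show ?thesis by (simp add: integrable_dyadic_step)
qed

lemma lebesgue_sets_dyadic_level_set: "{x::real. P \<lfloor>2^n * x\<rfloor>} \<in> sets lebesgue"
proof -
  have "{x::real. P \<lfloor>2^n * x\<rfloor>} = (\<Union>i\<in>{i. P i}. {real_of_int i / 2^n ..< real_of_int (i+1) / 2^n})"
  proof (intro set_eqI iffI)
    fix x assume "x \<in> {x::real. P \<lfloor>2^n * x\<rfloor>}"
    moreover have "x \<in> {real_of_int \<lfloor>2^n * x\<rfloor> / 2^n ..< real_of_int (\<lfloor>2^n * x\<rfloor>+1) / 2^n}"
      by (simp add: field_simps) linarith
    ultimately show "x \<in> (\<Union>i\<in>{i. P i}. {real_of_int i / 2^n ..< real_of_int (i+1) / 2^n})" by blast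
  qed (use dyadic_step_eq_on_cell[of _ _ x "\<lambda>i. i" for x] in \<open>auto simp: dyadic_step_def\<close>)
  then show ?thesis by (auto intro: sets.countable_UN'')
qed

lemma convex_average_split:
  fixes a b :: "'a::real_vector"
  assumes Q: "convex Q" and m: "s < m" "m < t"
    and left: "(1/(m-s)) *\<^sub>R a \<in> Q" and right: "(1/(t-m)) *\<^sub>R b \<in> Q"
  shows "(1/(t-s)) *\<^sub>R (a + b) \<in> Q"
proof -
  define \<mu> where "\<mu> = (m - s) / (t - s)"
  have \<mu>: "0 \<le> \<mu>" "0 \<le> 1 - \<mu>" using m unfolding \<mu>_def by (auto simp: field_simps)
  have "\<mu> * (1/(m-s)) = 1/(t-s)" "(1 - \<mu>) * (1/(t-m)) = 1/(t-s)"
    using m unfolding \<mu>_def by (simp_all add: field_simps)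
  then have "\<mu> *\<^sub>R ((1/(m-s)) *\<^sub>R a) + (1 - \<mu>) *\<^sub>R ((1/(t-m)) *\<^sub>R b) = (1/(t-s)) *\<^sub>R (a + b)"
    by (simp add: scaleR_add_right)
  moreover have "\<mu> *\<^sub>R ((1/(m-s)) *\<^sub>R a) + (1 - \<mu>) *\<^sub>R ((1/(t-m)) *\<^sub>R b) \<in> Q"
    by (rule convexD[OF Q left right \<mu>]) simp
  ultimately show ?thesis by simp
qed

lemma average_dyadic_step_in_convex:
  fixes h :: "int \<Rightarrow> 'a::banach"
  assumes C: "convex C" and hC: "\<And>i. h i \<in> C" and st: "s < t"
  shows "(1/(t-s)) *\<^sub>R integral {s..t} (dyadic_step n h) \<in> C"
proof -
  have "(1/(t-s)) *\<^sub>R integral {s..t} (dyadic_step n h) \<in> C"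
    if "s < t" "nat (\<lceil>2^n * t\<rceil> - \<lfloor>2^n * s\<rfloor>) = N" for N s t
    using that
  proof (induction N arbitrary: s rule: less_induct)
    case (less N)
    define k where "k = \<lfloor>2^n * s\<rfloor>"
    define p where "p = real_of_int (k+1) / 2^n"
    have ks: "real_of_int k / 2^n \<le> s" unfolding k_def by (simp add: field_simps)
    have sp: "s < p" unfolding p_def k_def by (simp add: field_simps) linarith
    show ?case
    proof (cases "t \<le> p")
      case True
      have "integral {s..t} (dyadic_step n h) = (t - s) *\<^sub>R h k"
        using integral_dyadic_step_in_cell[of s t k n h] less.prems ks True
        by (auto simp: p_def intro: integral_unique)
      then show ?thesis using less.prems hC by simp
    next
      case False
      have "integral {s..p} (dyadic_step n h) = (p - s) *\<^sub>R h k"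
        using integral_dyadic_step_in_cell[of s p k n h] sp ks by (auto simp: p_def intro: integral_unique)
      then have left: "(1/(p-s)) *\<^sub>R integral {s..p} (dyadic_step n h) \<in> C"
        using sp hC by simp
      have "\<lfloor>2^n * p\<rfloor> = k + 1"
        by (simp add: p_def)
      moreover have "real_of_int (k+1) < 2^n * t"
        using False by (simp add: p_def field_simps)
      then have "\<lceil>2^n * t\<rceil> \<ge> k + 1"
        by linarith
      ultimately have "nat (\<lceil>2^n * t\<rceil> - \<lfloor>2^n * p\<rfloor>) < N"
        using less.prems unfolding k_def by linarith
      then have right: "(1/(t-p)) *\<^sub>R integral {p..t} (dyadic_step n h) \<in> C"
        using less.IH False by auto
      have "integral {s..t} (dyadic_step n h) = integral {s..p} (dyadic_step n h) + integral {p..t} (dyadic_step n h)"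
        using Henstock_Kurzweil_Integration.integral_combine[of s p t "dyadic_step n h"] sp False
          integrable_dyadic_step[of n h s t] by simp
      then show ?thesis
        using convex_average_split[OF C sp _ left right] False by simp
    qed
  qed
  then show ?thesis using st by blast
qed

lemma norm_integral_le_const:
  fixes g :: "real \<Rightarrow> 'a::real_normed_vector"
  assumes "g integrable_on {s..t}" "s \<le> t" "\<And>x. x \<in> {s..t} \<Longrightarrow> norm (g x) \<le> B" "0 \<le> B"
  shows "norm (integral {s..t} g) \<le> B * (t - s)"
  using has_integral_bound[of B g "integral {s..t} g" s t] assms
  by (simp add: integrable_integral)

section \<open>Dyadic difference quotients\<close>

definition dyadic_quotient :: "(real \<Rightarrow> 'a::real_normed_vector) \<Rightarrow> nat \<Rightarrow> int \<Rightarrow> 'a" where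
  "dyadic_quotient f n k = (2^n) *\<^sub>R (f (real_of_int (k+1) / 2^n) - f (real_of_int k / 2^n))"

lemma dyadic_quotient_in_slopes: "dyadic_quotient f n k \<in> slopes f"
proof -
  have "dyadic_quotient f n k = (f (real_of_int (k+1) / 2^n) - f (real_of_int k / 2^n)) /\<^sub>R
      (real_of_int (k+1) / 2^n - real_of_int k / 2^n)"
    by (simp add: dyadic_quotient_def field_simps)
  moreover have "real_of_int (k+1) / 2^n \<noteq> real_of_int k / 2^n"
    by (simp add: field_simps)
  ultimately show ?thesis unfolding slopes_def by blast
qed

lemma sum_dyadic_quotient_telescope:
  assumes "k \<le> l"
  shows "(\<Sum>i\<in>{k..<l}. (1/2^n) *\<^sub>R dyadic_quotient f n i) = f (real_of_int l / 2^n) - f (real_of_int k / 2^n)"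
  using assms
proof (induction l rule: int_ge_induct)
  case (step i)
  have "{k..<i+1} = insert i {k..<i}" using step.hyps by auto
  then show ?case using step.IH by (simp add: dyadic_quotient_def)
qed simp

lemma integral_dyadic_quotient_step_grid:
  fixes f :: "real \<Rightarrow> 'a::banach"
  assumes "k \<le> l"
  shows "integral {real_of_int k / 2^n .. real_of_int l / 2^n} (dyadic_step n (dyadic_quotient f n)) =
           f (real_of_int l / 2^n) - f (real_of_int k / 2^n)"
  using integral_unique[OF has_integral_dyadic_step_grid[OF assms, where n=n and h="dyadic_quotient f n"]]
    sum_dyadic_quotient_telescope[OF assms, of n f] by simp

lemma sum_int_blocks:
  fixes h :: "int \<Rightarrow> 'b::comm_monoid_add"
  assumes "a \<le> b"
  shows "(\<Sum>i\<in>{a * int P..<b * int P}. h i) = (\<Sum>k\<in>{a..<b}. \<Sum>r<P. h (k * int P + int r))"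
  using assms
proof (induction b rule: int_ge_induct)
  case (step b)
  have ab: "a * int P \<le> b * int P" using step.hyps by (simp add: mult_right_mono)
  have "(b+1) * int P = b * int P + int P" by (simp add: algebra_simps)
  then have u: "{a * int P..<(b+1) * int P} = {a * int P..<b * int P} \<union> {b * int P..<b * int P + int P}"
    using ivl_disj_un_two(3)[OF ab, of "b * int P + int P"] by simp
  have "{b * int P..<b * int P + int P} = (\<lambda>r. b * int P + int r) ` {..<P}"
  proof (intro set_eqI iffI)
    fix x assume "x \<in> {b * int P..<b * int P + int P}"
    then have "x = b * int P + int (nat (x - b * int P))" "nat (x - b * int P) < P" by auto
    then show "x \<in> (\<lambda>r. b * int P + int r) ` {..<P}" by blast
  qed auto
  moreover have "inj_on (\<lambda>r. b * int P + int r) {..<P}" by (auto simp: inj_on_def)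
  ultimately have "(\<Sum>i\<in>{b * int P..<b * int P + int P}. h i) = (\<Sum>r<P. h (b * int P + int r))"
    by (simp add: sum.reindex)
  moreover have "(\<Sum>i\<in>{a * int P..<(b+1) * int P}. h i) =
      (\<Sum>i\<in>{a * int P..<b * int P}. h i) + (\<Sum>i\<in>{b * int P..<b * int P + int P}. h i)"
    unfolding u by (rule sum.union_disjoint) auto
  moreover have "{a..<b+1} = insert b {a..<b}" using step.hyps by auto
  ultimately show ?case using step.IH by (simp add: add.commute)
qed simp

lemma dyadic_quotient_refine:
  "(1/2^n) *\<^sub>R dyadic_quotient f n k =
     (\<Sum>r<(2::nat)^p. (1/2^(n+p)) *\<^sub>R dyadic_quotient f (n+p) (k * 2^p + int r))"
proof -
  have "(\<Sum>r<(2::nat)^p. (1/2^(n+p)) *\<^sub>R dyadic_quotient f (n+p) (k * 2^p + int r))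
      = (\<Sum>i\<in>{k * int (2^p)..<(k+1) * int (2^p)}. (1/2^(n+p)) *\<^sub>R dyadic_quotient f (n+p) i)"
    using sum_int_blocks[where a=k and b="k+1" and P="2^p" and h="\<lambda>i. (1/2^(n+p)) *\<^sub>R dyadic_quotient f (n+p) i"]
    by (simp add: atLeastLessThanPlusOne_atLeastAtMost_int)
  also have "\<dots> = f (real_of_int ((k+1) * int (2^p)) / 2^(n+p)) - f (real_of_int (k * int (2^p)) / 2^(n+p))"
    by (rule sum_dyadic_quotient_telescope) simp
  also have "\<dots> = f (real_of_int (k+1) / 2^n) - f (real_of_int k / 2^n)"
    by (simp add: power_add)
  finally show ?thesis by (simp add: dyadic_quotient_def)
qed

context
  fixes f :: "real \<Rightarrow> 'a::banach"
  assumes lip1: "\<And>s t. norm (f s - f t) \<le> \<bar>s - t\<bar>"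
begin

lemma norm_dyadic_quotient_le: "norm (dyadic_quotient f n k) \<le> 1"
proof -
  have "norm (f (real_of_int (k+1) / 2^n) - f (real_of_int k / 2^n)) \<le> 1/2^n"
    using lip1[of "real_of_int (k+1) / 2^n" "real_of_int k / 2^n"] by (simp add: field_simps)
  moreover have "norm (dyadic_quotient f n k) =
      2^n * norm (f (real_of_int (k+1) / 2^n) - f (real_of_int k / 2^n))"
    by (simp only: dyadic_quotient_def norm_scaleR power_abs abs_numeral)
  ultimately show ?thesis
    by (simp add: field_simps)
qed

lemma norm_integral_dyadic_quotient_step:
  assumes "s \<le> t"
  shows "norm (integral {s..t} (dyadic_step n (dyadic_quotient f n)) - (f t - f s)) \<le> 4 / 2^n"
proof -
  let ?h = "dyadic_step n (dyadic_quotient f n)"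
  have I: "?h integrable_on {a..b}" for a b by (rule integrable_dyadic_step)
  have B: "norm (integral {a..b} ?h) \<le> b - a" if "a \<le> b" for a b
    using norm_integral_le_const[OF I that, of 1] norm_dyadic_quotient_le
    by (simp add: dyadic_step_def)
  define k where "k = \<lceil>2^n * s\<rceil>"
  define l where "l = \<lfloor>2^n * t\<rfloor>"
  show ?thesis
  proof (cases "k \<le> l")
    case True
    define p where "p = real_of_int k / 2^n"
    define q where "q = real_of_int l / 2^n"
    have sp: "s \<le> p" "p < s + 1/2^n" unfolding p_def k_def
      by (simp_all add: field_simps) linarith+
    have qt: "q \<le> t" "t < q + 1/2^n" unfolding q_def l_def
      by (simp_all add: field_simps) linarith+
    have pq: "p \<le> q" unfolding p_def q_def using True by (simp add: divide_right_mono)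
    have "integral {s..t} ?h = integral {s..p} ?h + integral {p..q} ?h + integral {q..t} ?h"
      using Henstock_Kurzweil_Integration.integral_combine[OF sp(1), of t ?h]
        Henstock_Kurzweil_Integration.integral_combine[OF pq qt(1) I] pq qt I
      by (simp add: add.assoc)
    moreover have "integral {p..q} ?h = f q - f p"
      unfolding p_def q_def by (rule integral_dyadic_quotient_step_grid[OF True])
    ultimately have "integral {s..t} ?h - (f t - f s) =
        integral {s..p} ?h + integral {q..t} ?h - (f t - f q) - (f p - f s)"
      by (simp add: algebra_simps)
    then have "norm (integral {s..t} ?h - (f t - f s)) \<le>
        norm (integral {s..p} ?h) + norm (integral {q..t} ?h) + norm (f t - f q) + norm (f p - f s)"
      by (smt (verit) norm_diff_ineq norm_triangle_ineq4 norm_triangle_ineq)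
    also have "\<dots> \<le> (p - s) + (t - q) + (t - q) + (p - s)"
      using B[OF sp(1)] B[OF qt(1)] lip1[of t q] lip1[of p s] sp qt by auto
    also have "\<dots> \<le> 4/2^n" using sp qt by simp
    finally show ?thesis .
  next
    case False
    have "2^n * t - 2^n * s < 1" using False unfolding k_def l_def by linarith
    then have ts: "t - s < 1/2^n" by (simp add: field_simps)
    have "norm (integral {s..t} ?h - (f t - f s)) \<le> norm (integral {s..t} ?h) + norm (f t - f s)"
      by (rule norm_triangle_ineq4)
    also have "\<dots> \<le> (t - s) + (t - s)" using B[OF assms] lip1[of t s] assms by auto
    also have "\<dots> \<le> 4/2^n" using ts by (simp add: field_simps)
    finally show ?thesis .
  qed
qed

end

definition dyadic_deviation :: "(real \<Rightarrow> 'a::real_normed_vector) \<Rightarrow> nat \<Rightarrow> nat \<Rightarrow> 'a \<Rightarrow> real" where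
  "dyadic_deviation f R n c =
     (\<Sum>k\<in>{- (int R * 2^n)..<int R * 2^n}. (1/2^n) * norm (dyadic_quotient f n k - c))"

definition dyadic_refinement_dist :: "(real \<Rightarrow> 'a::real_normed_vector) \<Rightarrow> nat \<Rightarrow> nat \<Rightarrow> nat \<Rightarrow> real" where
  "dyadic_refinement_dist f R n p =
     (\<Sum>i\<in>{- (int R * 2^(n+p))..<int R * 2^(n+p)}.
        (1/2^(n+p)) * norm (dyadic_quotient f (n+p) i - dyadic_quotient f n (i div 2^p)))"

lemma card_symmetric_int_interval: "card {- (int R * 2^n)..<int R * 2^n} = 2 * R * 2^n"
  by (simp add: nat_mult_distrib nat_power_eq)

lemma symmetric_int_interval_blocks:
  "{- (int R * 2^(n+p))..<int R * 2^(n+p)} = {(- (int R * 2^n)) * int (2^p)..<(int R * 2^n) * int (2^p)}"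
  by (simp add: power_add algebra_simps)

lemma sum_dyadic_weights: "(\<Sum>r<(2::nat)^p. (1/2^(n+p)::real)) = 1/2^n"
  by (simp add: power_add)

lemma norm_dyadic_quotient_diff_le_refine:
  "(1/2^n) * norm (dyadic_quotient f n k - c) \<le>
     (\<Sum>r<(2::nat)^p. (1/2^(n+p)) * norm (dyadic_quotient f (n+p) (k*2^p + int r) - c))"
proof -
  have "(\<Sum>r<(2::nat)^p. (1/2^(n+p)) *\<^sub>R c) = (1/2^n) *\<^sub>R c"
    by (simp only: scaleR_sum_left[symmetric] sum_dyadic_weights)
  then have "(1/2^n) *\<^sub>R (dyadic_quotient f n k - c) =
      (\<Sum>r<(2::nat)^p. (1/2^(n+p)) *\<^sub>R (dyadic_quotient f (n+p) (k*2^p + int r) - c))"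
    by (simp add: scaleR_diff_right sum_subtractf dyadic_quotient_refine[of n f k p])
  then have "(1/2^n) * norm (dyadic_quotient f n k - c) =
      norm (\<Sum>r<(2::nat)^p. (1/2^(n+p)) *\<^sub>R (dyadic_quotient f (n+p) (k*2^p + int r) - c))"
    by (metis abs_of_nonneg norm_scaleR zero_le_divide_1_iff zero_le_numeral zero_le_power)
  also have "\<dots> \<le> (\<Sum>r<(2::nat)^p. norm ((1/2^(n+p)) *\<^sub>R (dyadic_quotient f (n+p) (k*2^p + int r) - c)))"
    by (rule norm_sum)
  also have "\<dots> = (\<Sum>r<(2::nat)^p. (1/2^(n+p)) * norm (dyadic_quotient f (n+p) (k*2^p + int r) - c))"
    by simp
  finally show ?thesis .
qed

lemma sum_norm_dyadic_quotient_refine_diff_le: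
  "(\<Sum>r<(2::nat)^p. (1/2^(n+p)) * norm (dyadic_quotient f (n+p) (k*2^p + int r) - dyadic_quotient f n k))
     \<le> (\<Sum>r<(2::nat)^p. (1/2^(n+p)) * norm (dyadic_quotient f (n+p) (k*2^p + int r) - c))
       + (1/2^n) * norm (dyadic_quotient f n k - c)"
proof -
  have "(\<Sum>r<(2::nat)^p. (1/2^(n+p)) *
        norm (dyadic_quotient f (n+p) (k*2^p + int r) - dyadic_quotient f n k))
      \<le> (\<Sum>r<(2::nat)^p. (1/2^(n+p)) *
        (norm (dyadic_quotient f (n+p) (k*2^p + int r) - c) + norm (dyadic_quotient f n k - c)))"
  proof (rule sum_mono)
    fix r
    let ?q = "dyadic_quotient f (n+p) (k*2^p + int r)"
    have "norm (?q - dyadic_quotient f n k) \<le> norm (?q - c) + norm (dyadic_quotient f n k - c)"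
      using norm_diff_triangle_ineq[of ?q c c "dyadic_quotient f n k"] by (simp add: norm_minus_commute)
    then show "(1/2^(n+p)) * norm (?q - dyadic_quotient f n k) \<le>
        (1/2^(n+p)) * (norm (?q - c) + norm (dyadic_quotient f n k - c))"
      by (simp add: divide_right_mono)
  qed
  also have "\<dots> = (\<Sum>r<(2::nat)^p. (1/2^(n+p)) * norm (dyadic_quotient f (n+p) (k*2^p + int r) - c))
      + (\<Sum>r<(2::nat)^p. (1/2^(n+p)::real)) * norm (dyadic_quotient f n k - c)"
    by (simp add: distrib_left sum.distrib sum_distrib_right)
  finally show ?thesis unfolding sum_dyadic_weights .
qed

lemma dyadic_deviation_refine:
  "dyadic_deviation f R (n+p) c = (\<Sum>k\<in>{- (int R * 2^n)..<int R * 2^n}.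
     \<Sum>r<(2::nat)^p. (1/2^(n+p)) * norm (dyadic_quotient f (n+p) (k*2^p + int r) - c))"
  unfolding dyadic_deviation_def symmetric_int_interval_blocks
  by (subst sum_int_blocks) auto

lemma dyadic_deviation_mono: "dyadic_deviation f R n c \<le> dyadic_deviation f R (n+p) c"
  unfolding dyadic_deviation_refine
  by (unfold dyadic_deviation_def, rule sum_mono, rule norm_dyadic_quotient_diff_le_refine)

lemma dyadic_refinement_dist_eq:
  "dyadic_refinement_dist f R n p = (\<Sum>k\<in>{- (int R * 2^n)..<int R * 2^n}.
     \<Sum>r<(2::nat)^p. (1/2^(n+p)) * norm (dyadic_quotient f (n+p) (k*2^p + int r) - dyadic_quotient f n k))"
  unfolding dyadic_refinement_dist_def symmetric_int_interval_blocks
  by (subst sum_int_blocks) (auto simp: div_add1_eq)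

context
  fixes f :: "real \<Rightarrow> 'a::banach" and R :: nat
  assumes lip1: "\<And>s t. norm (f s - f t) \<le> \<bar>s - t\<bar>"
begin

lemma dyadic_deviation_le: "dyadic_deviation f R n c \<le> 2 * R * (1 + norm c)"
proof -
  have "dyadic_deviation f R n c \<le> (\<Sum>k\<in>{- (int R * 2^n)..<int R * 2^n}. (1/2^n) * (1 + norm c))"
    unfolding dyadic_deviation_def
  proof (rule sum_mono)
    fix k
    have "norm (dyadic_quotient f n k - c) \<le> 1 + norm c"
      using norm_dyadic_quotient_le[OF lip1, of n k] norm_triangle_ineq4[of "dyadic_quotient f n k" c]
      by linarith
    then show "(1/2^n) * norm (dyadic_quotient f n k - c) \<le> (1/2^n) * (1 + norm c)"
      by (simp add: divide_right_mono)
  qed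
  also have "\<dots> = 2 * R * (1 + norm c)"
    by (simp add: card_symmetric_int_interval)
  finally show ?thesis .
qed

text \<open>These increments are nonnegative and their sums over \<open>C\<close> increase and stay bounded
  as the level grows, which is what makes the levels a Cauchy sequence.\<close>

lemma dyadic_refinement_dist_le:
  fixes \<eta> :: real
  assumes C: "finite C" and net: "\<And>k. \<exists>c\<in>C. norm (dyadic_quotient f n k - c) \<le> \<eta>"
  shows "dyadic_refinement_dist f R n p \<le>
           (\<Sum>c\<in>C. dyadic_deviation f R (n+p) c - dyadic_deviation f R n c) + 4 * R * \<eta>"
proof -
  define gap where "gap k c =
    (\<Sum>r<(2::nat)^p. (1/2^(n+p)) * norm (dyadic_quotient f (n+p) (k*2^p + int r) - c))
      - (1/2^n) * norm (dyadic_quotient f n k - c)" for k c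
  have gap_nonneg: "gap k c \<ge> 0" for k c
    unfolding gap_def using norm_dyadic_quotient_diff_le_refine[of n f k c p] by simp
  have block: "(\<Sum>r<(2::nat)^p. (1/2^(n+p)) *
        norm (dyadic_quotient f (n+p) (k*2^p + int r) - dyadic_quotient f n k))
       \<le> (\<Sum>c\<in>C. gap k c) + 2 * \<eta> / 2^n" for k
  proof -
    obtain c where c: "c \<in> C" "norm (dyadic_quotient f n k - c) \<le> \<eta>" using net by blast
    have "(\<Sum>r<(2::nat)^p. (1/2^(n+p)) *
          norm (dyadic_quotient f (n+p) (k*2^p + int r) - dyadic_quotient f n k))
        \<le> (\<Sum>r<(2::nat)^p. (1/2^(n+p)) * norm (dyadic_quotient f (n+p) (k*2^p + int r) - c))
          + (1/2^n) * norm (dyadic_quotient f n k - c)"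
      by (rule sum_norm_dyadic_quotient_refine_diff_le)
    also have "\<dots> = gap k c + 2 * ((1/2^n) * norm (dyadic_quotient f n k - c))"
      unfolding gap_def by simp
    also have "\<dots> \<le> (\<Sum>c\<in>C. gap k c) + 2 * \<eta> / 2^n"
    proof -
      have "gap k c \<le> (\<Sum>c\<in>C. gap k c)"
        by (rule member_le_sum[OF c(1) _ C]) (use gap_nonneg in auto)
      moreover have "(1/2^n) * norm (dyadic_quotient f n k - c) \<le> \<eta> / 2^n"
        using c(2) by (simp add: divide_right_mono)
      ultimately show ?thesis by simp
    qed
    finally show ?thesis .
  qed
  have "dyadic_refinement_dist f R n p \<le>
      (\<Sum>k\<in>{- (int R * 2^n)..<int R * 2^n}. (\<Sum>c\<in>C. gap k c) + 2 * \<eta> / 2^n)"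
    unfolding dyadic_refinement_dist_eq by (rule sum_mono) (rule block)
  also have "\<dots> = (\<Sum>c\<in>C. \<Sum>k\<in>{- (int R * 2^n)..<int R * 2^n}. gap k c) + 4 * R * \<eta>"
    by (simp add: sum.distrib card_symmetric_int_interval sum.swap[of gap])
  also have "(\<Sum>c\<in>C. \<Sum>k\<in>{- (int R * 2^n)..<int R * 2^n}. gap k c) =
      (\<Sum>c\<in>C. dyadic_deviation f R (n+p) c - dyadic_deviation f R n c)"
    unfolding gap_def dyadic_deviation_refine by (simp add: sum_subtractf dyadic_deviation_def)
  finally show ?thesis .
qed

lemma dyadic_refinement_dist_cauchy:
  assumes slopes: "compact (closure (slopes f))" and R: "R > 0" and \<eta>: "\<eta> > 0"
  shows "\<exists>N. \<forall>n\<ge>N. \<forall>p. dyadic_refinement_dist f R n p \<le> \<eta>"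
proof -
  define e where "e = \<eta> / (8 * R)"
  have e: "e > 0" using \<eta> R by (simp add: e_def)
  obtain C where C: "finite C" "closure (slopes f) \<subseteq> (\<Union>c\<in>C. ball c e)"
    using slopes e unfolding compact_eq_totally_bounded by metis
  have net: "\<exists>c\<in>C. norm (dyadic_quotient f n k - c) \<le> e" for n k
  proof -
    have "dyadic_quotient f n k \<in> closure (slopes f)"
      using dyadic_quotient_in_slopes closure_subset by blast
    then obtain c where "c \<in> C" "dist c (dyadic_quotient f n k) < e" using C(2) by auto
    then show ?thesis by (auto simp: dist_norm norm_minus_commute intro!: bexI[of _ c])
  qed
  define \<Psi> where "\<Psi> n = (\<Sum>c\<in>C. dyadic_deviation f R n c)" for n
  have "incseq \<Psi>"
    unfolding incseq_Suc_iff \<Psi>_def using dyadic_deviation_mono[of f R _ _ 1] by (simp add: sum_mono)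
  moreover have "bdd_above (range \<Psi>)"
    unfolding \<Psi>_def using dyadic_deviation_le
    by (intro bdd_aboveI[where M="\<Sum>c\<in>C. 2 * R * (1 + norm c)"]) (auto intro: sum_mono)
  ultimately have "Cauchy \<Psi>"
    using LIMSEQ_incseq_SUP LIMSEQ_imp_Cauchy by blast
  then obtain N where N: "\<And>m n. m \<ge> N \<Longrightarrow> n \<ge> N \<Longrightarrow> dist (\<Psi> m) (\<Psi> n) < \<eta>/2"
    using \<eta> by (meson CauchyD half_gt_zero metric_CauchyD)
  have "dyadic_refinement_dist f R n p \<le> \<eta>" if "n \<ge> N" for n p
  proof -
    have "dyadic_refinement_dist f R n p \<le> (\<Psi> (n+p) - \<Psi> n) + 4 * R * e"
      using dyadic_refinement_dist_le[OF C(1) net] by (simp add: \<Psi>_def sum_subtractf)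
    moreover have "\<Psi> (n+p) - \<Psi> n < \<eta>/2"
      using N[of "n+p" n] that unfolding dist_real_def by linarith
    moreover have "4 * R * e = \<eta>/2" using R by (simp add: e_def)
    ultimately show ?thesis by simp
  qed
  then show ?thesis by blast
qed

lemma fast_dyadic_subsequence:
  assumes "compact (closure (slopes f))" "R > 0"
  shows "\<exists>ns. strict_mono ns \<and> (\<forall>k p. dyadic_refinement_dist f R (ns k) p \<le> (1/8)^k)"
proof -
  have "\<forall>k. \<exists>N. \<forall>n\<ge>N. \<forall>p. dyadic_refinement_dist f R n p \<le> (1/8)^k"
    using dyadic_refinement_dist_cauchy[OF assms] by simp
  then obtain N where N: "\<And>k n p. n \<ge> N k \<Longrightarrow> dyadic_refinement_dist f R n p \<le> (1/8)^k"
    by metis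
  define ns where "ns k = (\<Sum>j\<le>k. N j) + k" for k
  have "strict_mono ns" unfolding strict_mono_Suc_iff ns_def by simp
  moreover have "ns k \<ge> N k" for k
    unfolding ns_def using member_le_sum[of k "{..k}" N] by simp
  ultimately show ?thesis using N by blast
qed

end

section \<open>An almost everywhere derivative\<close>

lemma sum_quarter_powers_le: "(\<Sum>i\<le>n. (1/4::real)^(i+j)) \<le> 2 * (1/4)^j"
proof -
  have "(\<Sum>i\<le>n. (1/4::real)^(i+j)) = (1/4)^j * (\<Sum>i\<le>n. (1/4::real)^i)"
    by (simp add: power_add sum_distrib_left mult.commute)
  also have "(\<Sum>i\<le>n. (1/4::real)^i) = (1 - (1/4)^Suc n) / (1 - 1/4)"
    by (subst sum_gp0) simp
  also have "\<dots> \<le> 2" by (simp add: field_simps)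
  finally show ?thesis by (simp add: mult_left_mono)
qed

lemma convergent_if_geometric_increments:
  fixes a :: "nat \<Rightarrow> 'a::banach"
  assumes "\<And>k. k \<ge> j \<Longrightarrow> norm (a (Suc k) - a k) \<le> (1/2)^k"
  shows "convergent a"
proof -
  have "summable (\<lambda>k. norm (a (Suc k) - a k))"
    by (rule summable_comparison_test'[of "\<lambda>k. (1/2::real)^k" j]) (use assms in auto)
  then have s: "summable (\<lambda>k. a (Suc k) - a k)" by (rule summable_norm_cancel)
  have "(\<lambda>n. a 0 + (\<Sum>k<n. a (Suc k) - a k)) \<longlonglongrightarrow> a 0 + suminf (\<lambda>k. a (Suc k) - a k)"
    by (intro tendsto_add tendsto_const summable_LIMSEQ[OF s])
  then show ?thesis
    by (auto simp: convergent_def sum_lessThan_telescope)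
qed

text \<open>Along levels whose consecutive distances are at most \<open>8\<^sup>-\<^sup>k\<close>, the set where consecutive
  approximants differ by more than \<open>2\<^sup>-\<^sup>k\<close> has measure at most \<open>4\<^sup>-\<^sup>k\<close>; as in the
  Borel--Cantelli lemma, almost every point of \<open>[-R, R]\<close> lies in only finitely many of these
  sets, and there the approximants converge.\<close>

locale dyadic_derivative =
  fixes f :: "real \<Rightarrow> 'a::banach" and R :: nat
  assumes lip1: "\<And>s t. norm (f s - f t) \<le> \<bar>s - t\<bar>"
    and R_pos: "R > 0"
    and compact_slopes: "compact (closure (slopes f))"
begin

definition level :: "nat \<Rightarrow> nat" where
  "level = (SOME ns. strict_mono ns \<and> (\<forall>k p. dyadic_refinement_dist f R (ns k) p \<le> (1/8)^k))"

lemma strict_mono_level: "strict_mono level"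
  and dyadic_refinement_dist_level: "dyadic_refinement_dist f R (level k) p \<le> (1/8)^k"
  using someI_ex[OF fast_dyadic_subsequence[OF lip1 compact_slopes R_pos]]
  unfolding level_def[symmetric] by auto

definition dyadic_approx :: "nat \<Rightarrow> real \<Rightarrow> 'a" where
  "dyadic_approx k = dyadic_step (level k) (dyadic_quotient f (level k))"

definition bad_cells :: "nat \<Rightarrow> int set" where
  "bad_cells k = {i \<in> {- (int R * 2^level (Suc k))..<int R * 2^level (Suc k)}.
      norm (dyadic_quotient f (level (Suc k)) i -
            dyadic_quotient f (level k) (i div 2^(level (Suc k) - level k))) > (1/2)^k}"

definition bad_set :: "nat \<Rightarrow> real set" where
  "bad_set k = (\<Union>i\<in>bad_cells k. {real_of_int i / 2^level (Suc k) .. real_of_int (i+1) / 2^level (Suc k)})"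

definition good_set :: "real set" where
  "good_set = {- real R..<real R} - (\<Inter>j. \<Union>k. bad_set (k + j))"

definition deriv_lim :: "real \<Rightarrow> 'a" where
  "deriv_lim x = lim (\<lambda>k. dyadic_approx k x)"

lemma norm_dyadic_approx_le: "norm (dyadic_approx k x) \<le> 1"
  unfolding dyadic_approx_def dyadic_step_def by (rule norm_dyadic_quotient_le[OF lip1])

lemma dyadic_approx_in_slopes: "dyadic_approx k x \<in> slopes f"
  unfolding dyadic_approx_def dyadic_step_def by (rule dyadic_quotient_in_slopes)

lemma bad_set_lmeasurable: "bad_set k \<in> lmeasurable"
proof -
  have "finite (bad_cells k)"
    unfolding bad_cells_def by (rule finite_subset[OF _ finite_atLeastLessThan_int]) auto
  then show ?thesis
    unfolding bad_set_def by (intro lmeasurable_compact compact_UN) auto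
qed

lemma measure_bad_set_le: "measure lebesgue (bad_set k) \<le> (1/4)^k"
proof -
  define m where "m = level (Suc k)"
  define n where "n = level k"
  have nm: "n \<le> m" unfolding m_def n_def using strict_mono_level by (simp add: strict_mono_less_eq)
  have fin: "finite (bad_cells k)"
    unfolding bad_cells_def by (rule finite_subset[OF _ finite_atLeastLessThan_int]) auto
  have "measure lebesgue (bad_set k) \<le>
      (\<Sum>i\<in>bad_cells k. measure lebesgue {real_of_int i / 2^m .. real_of_int (i+1) / 2^m})"
    unfolding bad_set_def m_def by (rule measure_UNION_le[OF fin]) auto
  also have "\<dots> = real (card (bad_cells k)) / 2^m"
    by (simp add: field_simps)
  finally have "measure lebesgue (bad_set k) * (1/2)^k \<le> real (card (bad_cells k)) / 2^m * (1/2)^k"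
    by (rule mult_right_mono) simp
  also have "\<dots> = (\<Sum>i\<in>bad_cells k. (1/2^m) * (1/2)^k)"
    by simp
  also have "\<dots> \<le> (\<Sum>i\<in>bad_cells k. (1/2^m) * norm (dyadic_quotient f m i - dyadic_quotient f n (i div 2^(m - n))))"
    by (rule sum_mono) (auto simp: bad_cells_def m_def n_def less_imp_le divide_right_mono)
  also have "\<dots> \<le> (\<Sum>i\<in>{- (int R * 2^m)..<int R * 2^m}.
      (1/2^m) * norm (dyadic_quotient f m i - dyadic_quotient f n (i div 2^(m - n))))"
    by (rule sum_mono2) (auto simp: bad_cells_def m_def n_def)
  also have "\<dots> = dyadic_refinement_dist f R n (m - n)"
    using nm by (simp add: dyadic_refinement_dist_def)
  also have "\<dots> \<le> (1/8)^k" unfolding n_def by (rule dyadic_refinement_dist_level)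
  also have "\<dots> = (1/4)^k * (1/2)^k" by (simp flip: power_mult_distrib)
  finally show ?thesis by simp
qed

lemma negligible_limsup_bad_set: "negligible (\<Inter>j. \<Union>k. bad_set (k + j))"
  unfolding negligible_outer_le
proof (intro allI impI)
  fix e :: real assume e: "e > 0"
  obtain j where j: "(1/4::real)^j < e/2"
    using real_arch_pow_inv[of "e/2" "1/4"] e by auto
  have B: "measure lebesgue (\<Union>i\<le>n. bad_set (i + j)) \<le> 2 * (1/4)^j" for n
  proof -
    have "measure lebesgue (\<Union>i\<le>n. bad_set (i + j)) \<le> (\<Sum>i\<le>n. measure lebesgue (bad_set (i + j)))"
      by (rule measure_UNION_le) (auto intro: fmeasurableD bad_set_lmeasurable)
    also have "\<dots> \<le> (\<Sum>i\<le>n. (1/4::real)^(i+j))" by (rule sum_mono) (rule measure_bad_set_le)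
    also have "\<dots> \<le> 2 * (1/4)^j" by (rule sum_quarter_powers_le)
    finally show ?thesis .
  qed
  have "(\<Union>k. bad_set (k + j)) \<in> lmeasurable" "measure lebesgue (\<Union>k. bad_set (k + j)) \<le> 2 * (1/4)^j"
    using fmeasurable_countable_Union[OF bad_set_lmeasurable B]
      measure_countable_Union_le[OF bad_set_lmeasurable B] by auto
  then show "\<exists>T. (\<Inter>j. \<Union>k. bad_set (k + j)) \<subseteq> T \<and> T \<in> lmeasurable \<and> measure lebesgue T \<le> e"
    using j by (intro exI[of _ "\<Union>k. bad_set (k + j)"]) auto
qed

lemma norm_dyadic_approx_Suc_diff_le:
  assumes x: "x \<in> {- real R..<real R}" and nx: "x \<notin> bad_set k"
  shows "norm (dyadic_approx (Suc k) x - dyadic_approx k x) \<le> (1/2)^k"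
proof -
  define m where "m = level (Suc k)"
  define n where "n = level k"
  have nm: "n \<le> m" unfolding m_def n_def using strict_mono_level by (simp add: strict_mono_less_eq)
  define i where "i = \<lfloor>2^m * x\<rfloor>"
  have "- real R * 2^m \<le> x * 2^m" "x * 2^m < real R * 2^m"
    using x by (intro mult_right_mono mult_strict_right_mono; simp)+
  then have "- (real R * 2^m) \<le> 2^m * x" "2^m * x < real R * 2^m"
    by (simp_all add: mult.commute)
  then have range: "- (int R * 2^m) \<le> i" "i < int R * 2^m"
    unfolding i_def le_floor_iff floor_less_iff by simp_all
  have "x \<in> {real_of_int i / 2^m .. real_of_int (i+1) / 2^m}"
    unfolding i_def by (simp add: field_simps) linarith
  then have "i \<notin> bad_cells k" using nx unfolding bad_set_def m_def by blast
  then have "norm (dyadic_quotient f m i - dyadic_quotient f n (i div 2^(m - n))) \<le> (1/2)^k"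
    using range unfolding bad_cells_def m_def n_def by auto
  moreover have "dyadic_approx (Suc k) x = dyadic_quotient f m i"
    unfolding dyadic_approx_def dyadic_step_def m_def i_def ..
  moreover have "dyadic_approx k x = dyadic_quotient f n (i div 2^(m-n))"
    unfolding dyadic_approx_def dyadic_step_def i_def n_def m_def
    using floor_pow2_mult_div[OF nm[unfolded m_def n_def]] by simp
  ultimately show ?thesis by simp
qed

lemma dyadic_approx_tendsto: "x \<in> good_set \<Longrightarrow> (\<lambda>k. dyadic_approx k x) \<longlonglongrightarrow> deriv_lim x"
proof -
  assume x: "x \<in> good_set"
  then obtain j where "\<And>k. x \<notin> bad_set (k + j)" unfolding good_set_def by blast
  then have "\<And>k. k \<ge> j \<Longrightarrow> x \<notin> bad_set k" by (metis le_add_diff_inverse2)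
  then have "\<And>k. k \<ge> j \<Longrightarrow> norm (dyadic_approx (Suc k) x - dyadic_approx k x) \<le> (1/2)^k"
    using x norm_dyadic_approx_Suc_diff_le unfolding good_set_def by blast
  then have "convergent (\<lambda>k. dyadic_approx k x)" by (rule convergent_if_geometric_increments)
  then show ?thesis unfolding deriv_lim_def by (simp add: convergent_LIMSEQ_iff)
qed

lemma deriv_lim_in_closure_slopes: "x \<in> good_set \<Longrightarrow> deriv_lim x \<in> closure (slopes f)"
  by (rule closed_sequentially[OF closed_closure _ dyadic_approx_tendsto])
     (use dyadic_approx_in_slopes closure_subset in auto)

lemma norm_deriv_lim_le: "x \<in> good_set \<Longrightarrow> norm (deriv_lim x) \<le> 1"
  by (rule Lim_norm_ubound[OF _ dyadic_approx_tendsto]) (auto simp: norm_dyadic_approx_le)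

lemma negligible_outside_good_set: "negligible ({- real R..real R} - good_set)"
proof -
  have "{- real R..real R} - good_set \<subseteq> (\<Inter>j. \<Union>k. bad_set (k + j)) \<union> {real R}"
    unfolding good_set_def by auto
  then show ?thesis
    using negligible_limsup_bad_set by (metis negligible_Un negligible_sing negligible_subset)
qed

lemma lebesgue_sets_good_set: "good_set \<in> sets lebesgue"
  unfolding good_set_def by (rule sets.Diff[OF _ negligible_imp_sets[OF negligible_limsup_bad_set]]) simp

lemma bounded_good_set: "bounded good_set"
  unfolding good_set_def by (rule bounded_subset[of "{- real R..real R}"]) auto

lemma integrable_dyadic_approx: "dyadic_approx k integrable_on {a..b}"
  unfolding dyadic_approx_def by (rule integrable_dyadic_step)

lemma integrable_comp_dyadic_approx:
  "(\<lambda>x. \<Phi> (dyadic_approx k x) :: 'b::banach) integrable_on {a..b}"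
proof -
  have "(\<lambda>x. \<Phi> (dyadic_approx k x)) = dyadic_step (level k) (\<lambda>i. \<Phi> (dyadic_quotient f (level k) i))"
    by (rule ext) (simp add: dyadic_approx_def dyadic_step_def)
  then show ?thesis by (simp add: integrable_dyadic_step)
qed

lemma integrable_comp2_dyadic_approx:
  "(\<lambda>x. \<Phi> (dyadic_approx k x) (dyadic_approx l x) :: 'b::banach) integrable_on {a..b}"
  unfolding dyadic_approx_def dyadic_step_def by (rule integrable_dyadic_step_pair)

lemma norm_integral_dyadic_approx_diff_le:
  assumes "s \<le> t"
  shows "norm (integral {s..t} (dyadic_approx k) - (f t - f s)) \<le> 4 / 2^level k"
  unfolding dyadic_approx_def by (rule norm_integral_dyadic_quotient_step[OF lip1 assms])

lemma level_error_tendsto_0: "(\<lambda>k. 4 / 2^level k :: real) \<longlonglongrightarrow> 0"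
proof -
  have "(\<lambda>k. 4 * (1/2::real)^k) \<longlonglongrightarrow> 4 * 0"
    by (intro tendsto_mult tendsto_const LIMSEQ_power_zero) auto
  then have geometric: "(\<lambda>k. 4 * (1/2::real)^k) \<longlonglongrightarrow> 0" by simp
  have "norm (4 / 2^level k :: real) \<le> 4 * (1/2)^k" for k
  proof -
    have "(2::real)^k \<le> 2^level k"
      using strict_mono_imp_increasing[OF strict_mono_level] by (simp add: power_increasing)
    then show ?thesis by (simp add: field_simps power_one_over)
  qed
  then show ?thesis
    by (rule Lim_null_comparison[OF always_eventually[OF allI] geometric])
qed

lemma integral_dyadic_approx_tendsto:
  fixes \<Theta> :: "real \<Rightarrow> 'a \<Rightarrow> real"
  assumes ab: "- real R \<le> a" "b \<le> real R"
    and int: "\<And>k. (\<lambda>x. \<Theta> x (dyadic_approx k x)) integrable_on {a..b}"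
    and cont: "\<And>x y. isCont (\<Theta> x) y"
    and bnd: "\<And>x y. norm y \<le> 1 \<Longrightarrow> \<bar>\<Theta> x y\<bar> \<le> B"
  shows "(\<lambda>x. \<Theta> x (deriv_lim x)) integrable_on {a..b}"
    and "(\<lambda>k. integral {a..b} (\<lambda>x. \<Theta> x (dyadic_approx k x))) \<longlonglongrightarrow> integral {a..b} (\<lambda>x. \<Theta> x (deriv_lim x))"
proof -
  define S where "S = {a..b} \<inter> good_set"
  have eqS: "negligible (({a..b} - S) \<union> (S - {a..b}))"
    by (rule negligible_subset[OF negligible_outside_good_set]) (use ab in \<open>auto simp: S_def\<close>)
  have intS: "(\<lambda>x. \<Theta> x (dyadic_approx k x)) integrable_on S" for k
    using int integrable_spike_set_eq[OF eqS] by blast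
  have hS: "(\<lambda>x. B) integrable_on S"
    using integrable_spike_set_eq[OF eqS] integrable_const_ivl by blast
  have conv: "(\<lambda>k. \<Theta> x (dyadic_approx k x)) \<longlonglongrightarrow> \<Theta> x (deriv_lim x)" if "x \<in> S" for x
    using that by (intro isCont_tendsto_compose[OF cont dyadic_approx_tendsto]) (auto simp: S_def)
  have bnd': "norm (\<Theta> x (dyadic_approx k x)) \<le> B" for k x
    using bnd[OF norm_dyadic_approx_le] by simp
  note dc = dominated_convergence[OF intS hS bnd' conv]
  have eqS': "negligible ((S - {a..b}) \<union> ({a..b} - S))"
    using eqS by (simp add: Un_commute)
  show "(\<lambda>x. \<Theta> x (deriv_lim x)) integrable_on {a..b}"
    using dc(1) integrable_spike_set_eq[OF eqS'] by blast
  have "integral S g = integral {a..b} g" for g :: "real \<Rightarrow> real"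
    by (rule integral_spike_set) (use eqS in \<open>auto intro: negligible_subset\<close>)
  then show "(\<lambda>k. integral {a..b} (\<lambda>x. \<Theta> x (dyadic_approx k x))) \<longlonglongrightarrow> integral {a..b} (\<lambda>x. \<Theta> x (deriv_lim x))"
    using dc(2) by simp
qed

lemma norm_diff_le_integral_norm_deriv_lim:
  assumes "- real R \<le> s" "s \<le> t" "t \<le> real R"
  shows "(\<lambda>x. norm (deriv_lim x)) integrable_on {s..t}"
    and "norm (f t - f s) \<le> integral {s..t} (\<lambda>x. norm (deriv_lim x))"
proof -
  note dc = integral_dyadic_approx_tendsto[where \<Theta>="\<lambda>x y. norm y" and B=1,
      OF assms(1,3) integrable_comp_dyadic_approx]
  show "(\<lambda>x. norm (deriv_lim x)) integrable_on {s..t}" using dc(1) by simp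
  have "norm (f t - f s) \<le> integral {s..t} (\<lambda>x. norm (dyadic_approx k x)) + 4 / 2^level k" for k
  proof -
    have "norm (integral {s..t} (dyadic_approx k)) \<le> integral {s..t} (\<lambda>x. norm (dyadic_approx k x))"
      by (rule integral_norm_bound_integral[OF integrable_dyadic_approx integrable_comp_dyadic_approx]) simp
    moreover have "norm (f t - f s) \<le> norm (integral {s..t} (dyadic_approx k)) +
        norm (integral {s..t} (dyadic_approx k) - (f t - f s))"
      using norm_triangle_sub[of "f t - f s" "integral {s..t} (dyadic_approx k)"]
      by (simp add: norm_minus_commute)
    ultimately show ?thesis
      using norm_integral_dyadic_approx_diff_le[OF assms(2), of k] by linarith
  qed
  moreover have "(\<lambda>k. integral {s..t} (\<lambda>x. norm (dyadic_approx k x)) + 4 / 2^level k)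
      \<longlonglongrightarrow> integral {s..t} (\<lambda>x. norm (deriv_lim x)) + 0"
    using dc(2) by (intro tendsto_add level_error_tendsto_0) simp
  ultimately show "norm (f t - f s) \<le> integral {s..t} (\<lambda>x. norm (deriv_lim x))"
    using LIMSEQ_le_const[of _ "integral {s..t} (\<lambda>x. norm (deriv_lim x)) + 0"] by fastforce
qed

end

section \<open>Lebesgue density\<close>

lemma measure_ball_real: "r > 0 \<Longrightarrow> measure lebesgue (ball (x::real) r) = 2 * r"
  by (simp add: ball_eq_greaterThanLessThan)

lemma measure_UN_thin_balls_le:
  fixes E V :: "real set" and c r :: "'i \<Rightarrow> real"
  assumes E: "E \<in> sets lebesgue" and V: "bounded V" "open V" and e: "e > 0"
    and I: "finite I" and disj: "pairwise (\<lambda>i j. disjnt (ball (c i) (r i)) (ball (c j) (r j))) I"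
    and sub: "\<And>i. i \<in> I \<Longrightarrow> ball (c i) (r i) \<subseteq> V"
    and thin: "\<And>i. i \<in> I \<Longrightarrow> 0 < r i \<and> e * (2 * r i) \<le> measure lebesgue (ball (c i) (r i) - E)"
  shows "measure lebesgue (\<Union>i\<in>I. ball (c i) (r i)) \<le> measure lebesgue (V - E) / e"
proof -
  have "measure lebesgue (\<Union>i\<in>I. ball (c i) (r i)) \<le> (\<Sum>i\<in>I. measure lebesgue (ball (c i) (r i)))"
    by (rule measure_UNION_le[OF I]) auto
  also have "\<dots> \<le> (\<Sum>i\<in>I. measure lebesgue (ball (c i) (r i) - E) / e)"
  proof (rule sum_mono)
    fix i assume "i \<in> I"
    then have "0 < r i" "e * (2 * r i) \<le> measure lebesgue (ball (c i) (r i) - E)"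
      using thin by auto
    moreover have "measure lebesgue (ball (c i) (r i)) = 2 * r i"
      by (rule measure_ball_real) fact
    ultimately show "measure lebesgue (ball (c i) (r i)) \<le> measure lebesgue (ball (c i) (r i) - E) / e"
      using e by (simp add: field_simps)
  qed
  also have "\<dots> = measure lebesgue (\<Union>i\<in>I. ball (c i) (r i) - E) / e"
  proof -
    have "measure lebesgue (\<Union>i\<in>I. ball (c i) (r i) - E) = (\<Sum>i\<in>I. measure lebesgue (ball (c i) (r i) - E))"
    proof (rule measure_finite_Union[OF I])
      show "(\<lambda>i. ball (c i) (r i) - E) ` I \<subseteq> sets lebesgue" using E by auto
      show "disjoint_family_on (\<lambda>i. ball (c i) (r i) - E) I"
        using disj unfolding disjoint_family_on_def pairwise_def disjnt_def by blast
      show "emeasure lebesgue (ball (c i) (r i) - E) \<noteq> \<infinity>" for i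
        using fmeasurableD2[OF fmeasurable_Diff[OF lmeasurable_ball E]] by simp
    qed
    then show ?thesis by (simp add: sum_divide_distrib)
  qed
  also have "\<dots> \<le> measure lebesgue (V - E) / e"
  proof -
    have "(\<Union>i\<in>I. ball (c i) (r i) - E) \<subseteq> V - E" using sub by blast
    moreover have "(\<Union>i\<in>I. ball (c i) (r i) - E) \<in> sets lebesgue"
      by (intro sets.finite_UN[OF I] sets.Diff fmeasurableD[OF lmeasurable_ball] E)
    moreover have "V - E \<in> lmeasurable"
      using V E by (intro bounded_set_imp_lmeasurable) (auto intro: bounded_subset)
    ultimately have "measure lebesgue (\<Union>i\<in>I. ball (c i) (r i) - E) \<le> measure lebesgue (V - E)"
      by (rule measure_mono_fmeasurable)
    then show ?thesis
      using e by (simp add: divide_right_mono)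
  qed
  finally show ?thesis .
qed

lemma bounded_open_superset_small_excess:
  fixes E :: "real set"
  assumes E: "E \<in> sets lebesgue" "bounded E" and \<delta>: "\<delta> > 0"
  shows "\<exists>V. open V \<and> bounded V \<and> E \<subseteq> V \<and> measure lebesgue (V - E) < \<delta>"
proof -
  obtain U where U: "open U" "E \<subseteq> U" "U - E \<in> lmeasurable" "emeasure lebesgue (U - E) < ennreal \<delta>"
    using sets_lebesgue_outer_open[OF E(1) \<delta>] by auto
  obtain M where M: "E \<subseteq> ball 0 M" using bounded_subset_ballD[OF E(2)] by blast
  have "measure lebesgue (U \<inter> ball 0 M - E) \<le> measure lebesgue (U - E)"
    by (rule measure_mono_fmeasurable) (use U E in \<open>auto intro: sets.Diff\<close>)
  also have "measure lebesgue (U - E) < \<delta>"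
    using U(3,4) \<delta> by (simp add: emeasure_eq_measure2 ennreal_less_iff)
  finally show ?thesis
    using U M by (intro exI[of _ "U \<inter> ball 0 M"]) auto
qed

lemma negligible_thin_density_points:
  fixes E :: "real set"
  assumes E: "E \<in> sets lebesgue" "bounded E" and e: "e > 0"
  shows "negligible {x \<in> E. \<forall>d>0. \<exists>r. 0 < r \<and> r < d \<and> e * (2*r) \<le> measure lebesgue (ball x r - E)}"
    (is "negligible ?S")
  unfolding negligible_outer_le
proof (intro allI impI)
  fix \<delta> :: real assume \<delta>: "\<delta> > 0"
  have "e * \<delta> / 2 > 0" using e \<delta> by simp
  then obtain V where V: "open V" "bounded V" "E \<subseteq> V" "measure lebesgue (V - E) < e * \<delta> / 2"
    using bounded_open_superset_small_excess[OF E] by blast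
  then have small: "measure lebesgue (V - E) / e < \<delta> / 2"
    using e by (simp add: field_simps)
  define K where "K = {(x, r). x \<in> ?S \<and> 0 < r \<and> ball x r \<subseteq> V \<and> e * (2*r) \<le> measure lebesgue (ball x r - E)}"
  have "\<exists>i. i \<in> K \<and> x \<in> ball (fst i) (snd i) \<and> snd i < d" if x: "x \<in> ?S" and d: "0 < d" for x d
  proof -
    obtain d0 where d0: "d0 > 0" "ball x d0 \<subseteq> V" using x V open_contains_ball by blast
    have "\<forall>d>0. \<exists>r. 0 < r \<and> r < d \<and> e * (2*r) \<le> measure lebesgue (ball x r - E)"
      using x by blast
    moreover have "min d d0 > 0" using d0 d by simp
    ultimately obtain r where r: "0 < r" "r < min d d0" "e * (2*r) \<le> measure lebesgue (ball x r - E)"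
      by blast
    then have "ball x r \<subseteq> V" using d0 by (meson min_less_iff_conj less_imp_le subset_ball subset_trans)
    then show ?thesis using r x by (intro exI[of _ "(x, r)"]) (auto simp: K_def)
  qed
  then obtain C where C: "countable C" "C \<subseteq> K"
    and disj: "pairwise (\<lambda>i j. disjnt (ball (fst i) (snd i)) (ball (fst j) (snd j))) C"
    and rest: "negligible (?S - (\<Union>i\<in>C. ball (fst i) (snd i)))"
    by (rule Vitali_covering_theorem_balls[of ?S K fst snd])
  have bnd: "measure lebesgue (\<Union>i\<in>C'. ball (fst i) (snd i)) \<le> \<delta> / 2" if C': "C' \<subseteq> C" "finite C'" for C'
  proof -
    have "measure lebesgue (\<Union>i\<in>C'. ball (fst i) (snd i)) \<le> measure lebesgue (V - E) / e"
    proof (rule measure_UN_thin_balls_le[OF E(1) V(2,1) e C'(2)])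
      show "pairwise (\<lambda>i j. disjnt (ball (fst i) (snd i)) (ball (fst j) (snd j))) C'"
        by (rule pairwise_subset[OF disj C'(1)])
      fix i assume "i \<in> C'"
      then have "i \<in> K" using C' C(2) by auto
      then show "ball (fst i) (snd i) \<subseteq> V" "0 < snd i \<and> e * (2 * snd i) \<le> measure lebesgue (ball (fst i) (snd i) - E)"
        unfolding K_def by (cases i; simp)+
    qed
    then show ?thesis using small by linarith
  qed
  have balls: "(\<Union>i\<in>C. ball (fst i) (snd i)) \<in> lmeasurable"
      "measure lebesgue (\<Union>i\<in>C. ball (fst i) (snd i)) \<le> \<delta> / 2"
    using fmeasurable_UN_bound[OF C(1) _ bnd] measure_UN_bound[OF C(1) _ bnd] by auto
  have rest': "?S - (\<Union>i\<in>C. ball (fst i) (snd i)) \<in> lmeasurable"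
      "measure lebesgue (?S - (\<Union>i\<in>C. ball (fst i) (snd i))) = 0"
    using rest unfolding negligible_iff_measure by auto
  define T where "T = (\<Union>i\<in>C. ball (fst i) (snd i)) \<union> (?S - (\<Union>i\<in>C. ball (fst i) (snd i)))"
  have "T \<in> lmeasurable" unfolding T_def using balls(1) rest'(1) by (rule fmeasurable.Un)
  moreover have "measure lebesgue T \<le> \<delta>"
    using measure_Un_le[of "\<Union>i\<in>C. ball (fst i) (snd i)" lebesgue "?S - (\<Union>i\<in>C. ball (fst i) (snd i))"]
      balls rest' \<delta> unfolding T_def by (simp add: fmeasurableD)
  moreover have "?S \<subseteq> T" unfolding T_def by blast
  ultimately show "\<exists>T. ?S \<subseteq> T \<and> T \<in> lmeasurable \<and> measure lebesgue T \<le> \<delta>"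
    by blast
qed

lemma lebesgue_density_theorem:
  fixes E :: "real set"
  assumes E: "E \<in> sets lebesgue" "bounded E"
  shows "\<exists>N. negligible N \<and> (\<forall>x \<in> E - N. \<forall>e>0. \<exists>d>0. \<forall>r. 0 < r \<and> r < d \<longrightarrow>
           measure lebesgue (ball x r - E) < e * (2*r))"
proof -
  define S where "S n = {x \<in> E. \<forall>d>0. \<exists>r. 0 < r \<and> r < d \<and>
    (1/Suc n) * (2*r) \<le> measure lebesgue (ball x r - E)}" for n :: nat
  have "negligible (S n)" for n
    unfolding S_def by (rule negligible_thin_density_points[OF E]) simp
  then have N: "negligible (\<Union>n. S n)" by (rule negligible_Union_nat)
  have "\<exists>d>0. \<forall>r. 0 < r \<and> r < d \<longrightarrow> measure lebesgue (ball x r - E) < e * (2*r)"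
    if x: "x \<in> E - (\<Union>n. S n)" and e: "e > 0" for x e
  proof -
    obtain n where n: "1 / real (Suc n) < e" using e by (metis nat_approx_posE)
    have "x \<notin> S n" "x \<in> E" using x by auto
    then obtain d where d: "d > 0"
      and small: "\<And>r. 0 < r \<Longrightarrow> r < d \<Longrightarrow> \<not> (1/Suc n) * (2*r) \<le> measure lebesgue (ball x r - E)"
      unfolding S_def by blast
    have "measure lebesgue (ball x r - E) < e * (2*r)" if "0 < r" "r < d" for r
    proof -
      have "(1/Suc n) * (2*r) \<le> e * (2*r)"
        using n that by (intro mult_right_mono) auto
      then show ?thesis using small[OF that] by linarith
    qed
    then show ?thesis using d by blast
  qed
  then show ?thesis using N by blast
qed

section \<open>Primitives of perturbed derivatives\<close>

locale perturbed_derivative = dyadic_derivative f R for f :: "real \<Rightarrow> 'a::banach" and R +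
  fixes \<rho> :: "'a \<Rightarrow> 'a" and \<kappa> :: real
  assumes isCont_perturb: "\<And>y. isCont \<rho> y"
    and norm_perturb_le: "\<And>v. norm (\<rho> v) \<le> 1"
    and norm_perturb_diff_le: "\<And>v. norm v \<le> 1 \<Longrightarrow> norm (v - \<rho> v) \<le> \<kappa>"
begin

definition prim_approx :: "nat \<Rightarrow> real \<Rightarrow> 'a" where
  "prim_approx k t = integral {- real R..t} (\<lambda>x. \<rho> (dyadic_approx k x))"

definition prim :: "real \<Rightarrow> 'a" where
  "prim t = lim (\<lambda>k. prim_approx k t)"

definition L1_error :: "nat \<Rightarrow> real" where
  "L1_error k = integral {- real R..real R} (\<lambda>x. norm (\<rho> (dyadic_approx k x) - \<rho> (deriv_lim x)))"

lemma kappa_nonneg: "0 \<le> \<kappa>"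
proof -
  have "norm (\<rho> 0) \<le> \<kappa>" using norm_perturb_diff_le[of 0] by simp
  then show ?thesis using norm_ge_zero[of "\<rho> 0"] by linarith
qed

lemma integrable_perturb_approx: "(\<lambda>x. \<rho> (dyadic_approx k x)) integrable_on {a..b}"
  by (rule integrable_comp_dyadic_approx)

lemma norm_perturb_diff_le_2: "norm (\<rho> u - \<rho> v) \<le> 2"
  using norm_triangle_ineq4[of "\<rho> u" "\<rho> v"] norm_perturb_le[of u] norm_perturb_le[of v] by simp

lemma integrable_norm_perturb_approx_diff:
  "(\<lambda>x. norm (\<rho> (dyadic_approx k x) - \<rho> (deriv_lim x))) integrable_on {- real R..real R}"
  using norm_perturb_diff_le_2
  by (intro integral_dyadic_approx_tendsto(1)[where \<Theta>="\<lambda>x y. norm (\<rho> (dyadic_approx k x) - \<rho> y)" and B=2]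
      integrable_comp2_dyadic_approx) (auto intro!: continuous_intros isCont_perturb)

lemma L1_error_tendsto_0: "L1_error \<longlonglongrightarrow> 0"
proof -
  have "(\<lambda>k. integral {- real R..real R} (\<lambda>x. norm (\<rho> (dyadic_approx k x) - \<rho> (deriv_lim x))))
     \<longlonglongrightarrow> integral {- real R..real R} (\<lambda>x. norm (\<rho> (deriv_lim x) - \<rho> (deriv_lim x)))"
    using norm_perturb_diff_le_2
    by (intro integral_dyadic_approx_tendsto(2)[where \<Theta>="\<lambda>x y. norm (\<rho> y - \<rho> (deriv_lim x))" and B=2]
        integrable_norm_perturb_approx_diff) (auto intro!: continuous_intros isCont_perturb)
  then show ?thesis unfolding L1_error_def by simp
qed

lemma norm_prim_approx_diff_le:
  assumes t: "t \<in> {- real R..real R}"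
  shows "norm (prim_approx k t - prim_approx l t) \<le> L1_error k + L1_error l"
proof -
  let ?d = "\<lambda>x. norm (\<rho> (dyadic_approx k x) - \<rho> (dyadic_approx l x))"
  have int_d: "?d integrable_on {a..b}" for a b
    by (rule integrable_comp2_dyadic_approx[where \<Phi>="\<lambda>a b. norm (\<rho> a - \<rho> b)"])
  have "prim_approx k t - prim_approx l t =
      integral {- real R..t} (\<lambda>x. \<rho> (dyadic_approx k x) - \<rho> (dyadic_approx l x))"
    unfolding prim_approx_def by (rule integral_diff[symmetric]) (auto intro: integrable_perturb_approx)
  also have "norm \<dots> \<le> integral {- real R..t} ?d"
    by (intro integral_norm_bound_integral integrable_diff integrable_perturb_approx int_d) simp
  also have "\<dots> \<le> integral {- real R..real R} ?d"
    by (rule integral_subset_le) (use t int_d in auto)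
  also have "\<dots> \<le> integral {- real R..real R} (\<lambda>x. norm (\<rho> (dyadic_approx k x) - \<rho> (deriv_lim x)) +
      norm (\<rho> (dyadic_approx l x) - \<rho> (deriv_lim x)))"
    using norm_diff_triangle_ineq[of "\<rho> (dyadic_approx k x)" "\<rho> (deriv_lim x)" "\<rho> (deriv_lim x)"
        "\<rho> (dyadic_approx l x)" for x]
    by (intro integral_le int_d integrable_add integrable_norm_perturb_approx_diff)
       (simp add: norm_minus_commute)
  also have "\<dots> = L1_error k + L1_error l"
    unfolding L1_error_def by (rule integral_add) (auto intro: integrable_norm_perturb_approx_diff)
  finally show ?thesis .
qed

lemma prim_approx_tendsto:
  assumes t: "t \<in> {- real R..real R}"
  shows "(\<lambda>k. prim_approx k t) \<longlonglongrightarrow> prim t"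
proof -
  have "Cauchy (\<lambda>k. prim_approx k t)"
  proof (rule metric_CauchyI)
    fix e :: real assume e: "e > 0"
    obtain N where N: "\<And>k. k \<ge> N \<Longrightarrow> \<bar>L1_error k\<bar> < e/2"
      using L1_error_tendsto_0 e unfolding LIMSEQ_def by (metis dist_real_def diff_zero half_gt_zero)
    show "\<exists>M. \<forall>m\<ge>M. \<forall>n\<ge>M. dist (prim_approx m t) (prim_approx n t) < e"
    proof (intro exI allI impI)
      fix m n assume "m \<ge> N" "n \<ge> N"
      then show "dist (prim_approx m t) (prim_approx n t) < e"
        using norm_prim_approx_diff_le[OF t, of m n] N[of m] N[of n] by (simp add: dist_norm)
    qed
  qed
  then show ?thesis unfolding prim_def by (simp add: Cauchy_convergent_iff convergent_LIMSEQ_iff)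
qed

lemma integral_perturb_approx_tendsto:
  assumes "- real R \<le> s" "s \<le> t" "t \<le> real R"
  shows "(\<lambda>k. integral {s..t} (\<lambda>x. \<rho> (dyadic_approx k x))) \<longlonglongrightarrow> prim t - prim s"
proof -
  have "prim_approx k t - prim_approx k s = integral {s..t} (\<lambda>x. \<rho> (dyadic_approx k x))" for k
    unfolding prim_approx_def
    using Henstock_Kurzweil_Integration.integral_combine[OF assms(1,2) integrable_perturb_approx]
    by (simp add: algebra_simps)
  moreover have "(\<lambda>k. prim_approx k t - prim_approx k s) \<longlonglongrightarrow> prim t - prim s"
    using assms by (intro tendsto_diff prim_approx_tendsto) auto
  ultimately show ?thesis by simp
qed

lemma norm_prim_diff_le:
  assumes "- real R \<le> s" "s \<le> t" "t \<le> real R"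
  shows "norm (prim t - prim s) \<le> t - s"
proof (rule Lim_norm_ubound[OF _ integral_perturb_approx_tendsto[OF assms]])
  show "\<forall>\<^sub>F k in sequentially. norm (integral {s..t} (\<lambda>x. \<rho> (dyadic_approx k x))) \<le> t - s"
    using norm_integral_le_const[OF integrable_perturb_approx assms(2), where B=1] norm_perturb_le by auto
qed simp

lemma norm_diff_f_prim_le:
  assumes "- real R \<le> s" "s \<le> t" "t \<le> real R"
  shows "norm ((f t - f s) - (prim t - prim s)) \<le> \<kappa> * (t - s)"
proof -
  have approx: "norm (f t - f s - integral {s..t} (\<lambda>x. \<rho> (dyadic_approx k x))) \<le> 4 / 2^level k + \<kappa> * (t - s)" for k
  proof -
    have "norm (integral {s..t} (\<lambda>x. dyadic_approx k x - \<rho> (dyadic_approx k x))) \<le> \<kappa> * (t - s)"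
      by (intro norm_integral_le_const integrable_diff integrable_dyadic_approx integrable_perturb_approx
          norm_perturb_diff_le norm_dyadic_approx_le kappa_nonneg assms(2))
    moreover have "integral {s..t} (\<lambda>x. dyadic_approx k x - \<rho> (dyadic_approx k x)) =
        integral {s..t} (dyadic_approx k) - integral {s..t} (\<lambda>x. \<rho> (dyadic_approx k x))"
      by (rule integral_diff[OF integrable_dyadic_approx integrable_perturb_approx])
    then have "f t - f s - integral {s..t} (\<lambda>x. \<rho> (dyadic_approx k x)) =
        integral {s..t} (\<lambda>x. dyadic_approx k x - \<rho> (dyadic_approx k x)) -
        (integral {s..t} (dyadic_approx k) - (f t - f s))"
      by (simp add: algebra_simps)
    then have "norm (f t - f s - integral {s..t} (\<lambda>x. \<rho> (dyadic_approx k x))) \<le>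
        norm (integral {s..t} (\<lambda>x. dyadic_approx k x - \<rho> (dyadic_approx k x))) +
        norm (integral {s..t} (dyadic_approx k) - (f t - f s))"
      by (metis norm_triangle_ineq4)
    ultimately show ?thesis
      using norm_integral_dyadic_approx_diff_le[OF assms(2), of k] by linarith
  qed
  have l1: "(\<lambda>k. norm (f t - f s - integral {s..t} (\<lambda>x. \<rho> (dyadic_approx k x))))
      \<longlonglongrightarrow> norm (f t - f s - (prim t - prim s))"
    by (intro tendsto_norm tendsto_diff tendsto_const integral_perturb_approx_tendsto[OF assms])
  have l2: "(\<lambda>k. 4 / 2^level k + \<kappa> * (t - s)) \<longlonglongrightarrow> 0 + \<kappa> * (t - s)"
    by (intro tendsto_add level_error_tendsto_0 tendsto_const)
  show ?thesis
    using LIMSEQ_le[OF l1 l2] approx by simp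
qed

lemma prim_slope_in_closure_convex_hull:
  assumes "- real R \<le> s" "s < t" "t \<le> real R"
  shows "(1/(t-s)) *\<^sub>R (prim t - prim s) \<in> closure (convex hull (\<rho> ` slopes f))"
proof (rule closed_sequentially[OF closed_closure])
  show "(\<lambda>k. (1/(t-s)) *\<^sub>R integral {s..t} (\<lambda>x. \<rho> (dyadic_approx k x))) \<longlonglongrightarrow> (1/(t-s)) *\<^sub>R (prim t - prim s)"
    using assms by (intro tendsto_scaleR tendsto_const integral_perturb_approx_tendsto) auto
  have "(\<lambda>x. \<rho> (dyadic_approx k x)) = dyadic_step (level k) (\<lambda>i. \<rho> (dyadic_quotient f (level k) i))" for k
    by (rule ext) (simp add: dyadic_approx_def dyadic_step_def)
  moreover have "(1/(t-s)) *\<^sub>R integral {s..t} (dyadic_step (level k) (\<lambda>i. \<rho> (dyadic_quotient f (level k) i)))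
      \<in> convex hull (\<rho> ` slopes f)" for k
    by (rule average_dyadic_step_in_convex[OF convex_convex_hull _ assms(2)])
       (intro hull_inc imageI dyadic_quotient_in_slopes)
  ultimately show "(1/(t-s)) *\<^sub>R integral {s..t} (\<lambda>x. \<rho> (dyadic_approx k x)) \<in> closure (convex hull (\<rho> ` slopes f))" for k
    using closure_subset by auto
qed

lemma norm_prim_diff_linear_le:
  assumes "- real R \<le> s" "s \<le> t" "t \<le> real R"
  shows "(\<lambda>x. norm (\<rho> (deriv_lim x) - w)) integrable_on {s..t}"
    and "norm ((prim t - prim s) - (t - s) *\<^sub>R w) \<le> integral {s..t} (\<lambda>x. norm (\<rho> (deriv_lim x) - w))"
proof -
  have "\<bar>norm (\<rho> y - w)\<bar> \<le> 1 + norm w" for y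
    using norm_triangle_ineq4[of "\<rho> y" w] norm_perturb_le[of y] by simp
  note dc = integral_dyadic_approx_tendsto[where \<Theta>="\<lambda>x y. norm (\<rho> y - w)" and B="1 + norm w",
      OF assms(1,3) integrable_comp_dyadic_approx _ this]
  show "(\<lambda>x. norm (\<rho> (deriv_lim x) - w)) integrable_on {s..t}"
    by (rule dc(1)) (intro continuous_intros isCont_perturb)
  have approx: "norm (integral {s..t} (\<lambda>x. \<rho> (dyadic_approx k x)) - (t - s) *\<^sub>R w) \<le>
      integral {s..t} (\<lambda>x. norm (\<rho> (dyadic_approx k x) - w))" for k
  proof -
    have "integral {s..t} (\<lambda>x. \<rho> (dyadic_approx k x) - w) = integral {s..t} (\<lambda>x. \<rho> (dyadic_approx k x)) - (t - s) *\<^sub>R w"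
      using assms integral_diff[OF integrable_perturb_approx integrable_const_ivl, of s t k w] by simp
    moreover have "norm (integral {s..t} (\<lambda>x. \<rho> (dyadic_approx k x) - w)) \<le> integral {s..t} (\<lambda>x. norm (\<rho> (dyadic_approx k x) - w))"
      by (intro integral_norm_bound_integral integrable_diff integrable_perturb_approx integrable_const_ivl
          integrable_comp_dyadic_approx) simp
    ultimately show ?thesis by simp
  qed
  have l1: "(\<lambda>k. norm (integral {s..t} (\<lambda>x. \<rho> (dyadic_approx k x)) - (t - s) *\<^sub>R w))
      \<longlonglongrightarrow> norm ((prim t - prim s) - (t - s) *\<^sub>R w)"
    by (intro tendsto_norm tendsto_diff tendsto_const integral_perturb_approx_tendsto[OF assms])
  have l2: "(\<lambda>k. integral {s..t} (\<lambda>x. norm (\<rho> (dyadic_approx k x) - w)))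
      \<longlonglongrightarrow> integral {s..t} (\<lambda>x. norm (\<rho> (deriv_lim x) - w))"
    by (rule dc(2)) (intro continuous_intros isCont_perturb)
  show "norm ((prim t - prim s) - (t - s) *\<^sub>R w) \<le> integral {s..t} (\<lambda>x. norm (\<rho> (deriv_lim x) - w))"
    using LIMSEQ_le[OF l1 l2] approx by simp
qed

end

context perturbed_derivative
begin

definition near_set :: "'a \<Rightarrow> real \<Rightarrow> real set" where
  "near_set v q = {x \<in> good_set. norm (\<rho> (deriv_lim x) - v) < q}"

lemma near_set_eq:
  "near_set v q = good_set \<inter>
     (\<Union>p::nat. \<Union>N. \<Inter>k\<in>{N..}. {x. norm (\<rho> (dyadic_approx k x) - v) < q - 1/Suc p})"
proof (intro set_eqI iffI)
  fix x assume x: "x \<in> near_set v q"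
  then have good: "x \<in> good_set" and lt: "norm (\<rho> (deriv_lim x) - v) < q"
    by (auto simp: near_set_def)
  define \<delta> where "\<delta> = q - norm (\<rho> (deriv_lim x) - v)"
  have \<delta>: "\<delta> > 0" using lt by (simp add: \<delta>_def)
  obtain p :: nat where p: "1 / Suc p < \<delta>/2" using \<delta> by (metis half_gt_zero nat_approx_posE)
  have "(\<lambda>k. \<rho> (dyadic_approx k x)) \<longlonglongrightarrow> \<rho> (deriv_lim x)"
    by (rule isCont_tendsto_compose[OF isCont_perturb dyadic_approx_tendsto[OF good]])
  then obtain N where N: "\<And>k. k \<ge> N \<Longrightarrow> dist (\<rho> (dyadic_approx k x)) (\<rho> (deriv_lim x)) < \<delta>/2"
    using \<delta> unfolding LIMSEQ_def by (meson half_gt_zero)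
  have "norm (\<rho> (dyadic_approx k x) - v) < q - 1/Suc p" if "k \<ge> N" for k
  proof -
    have "norm (\<rho> (dyadic_approx k x) - v) \<le> norm (\<rho> (dyadic_approx k x) - \<rho> (deriv_lim x)) + norm (\<rho> (deriv_lim x) - v)"
      using norm_triangle_ineq[of "\<rho> (dyadic_approx k x) - \<rho> (deriv_lim x)" "\<rho> (deriv_lim x) - v"] by simp
    moreover have "norm (\<rho> (dyadic_approx k x) - \<rho> (deriv_lim x)) < \<delta>/2"
      using N[OF that] by (simp add: dist_norm)
    ultimately show ?thesis using p unfolding \<delta>_def by argo
  qed
  then show "x \<in> good_set \<inter> (\<Union>p::nat. \<Union>N. \<Inter>k\<in>{N..}. {x. norm (\<rho> (dyadic_approx k x) - v) < q - 1/Suc p})"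
    using good by blast
next
  fix x assume "x \<in> good_set \<inter> (\<Union>p::nat. \<Union>N. \<Inter>k\<in>{N..}. {x. norm (\<rho> (dyadic_approx k x) - v) < q - 1/Suc p})"
  then obtain p N where good: "x \<in> good_set"
    and b: "\<And>k. k \<ge> N \<Longrightarrow> norm (\<rho> (dyadic_approx k x) - v) < q - 1/Suc p"
    by auto
  have "(\<lambda>k. norm (\<rho> (dyadic_approx k x) - v)) \<longlonglongrightarrow> norm (\<rho> (deriv_lim x) - v)"
    by (intro tendsto_norm tendsto_diff tendsto_const isCont_tendsto_compose[OF isCont_perturb]
        dyadic_approx_tendsto[OF good])
  then have "norm (\<rho> (deriv_lim x) - v) \<le> q - 1/Suc p"
    by (rule LIMSEQ_le_const2) (use b less_imp_le in blast)
  moreover have "1 / real (Suc p) > 0" by simp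
  ultimately have "norm (\<rho> (deriv_lim x) - v) < q" by argo
  then show "x \<in> near_set v q" using good unfolding near_set_def by simp
qed

lemma lebesgue_sets_near_set: "near_set v q \<in> sets lebesgue"
proof -
  have level_set: "{x. norm (\<rho> (dyadic_approx k x) - v) < c} \<in> sets lebesgue" for k c
    unfolding dyadic_approx_def dyadic_step_def by (rule lebesgue_sets_dyadic_level_set)
  have "(\<Inter>k\<in>{N..}. {x. norm (\<rho> (dyadic_approx k x) - v) < q - 1/Suc p}) \<in> sets lebesgue" for N p
  proof (rule sets.countable_INT'')
    show "UNIV \<in> sets lebesgue" by simp
    show "countable {N..}" by (rule countableI_type)
    show "{x. norm (\<rho> (dyadic_approx k x) - v) < q - 1/Suc p} \<in> sets lebesgue" for k
      by (rule level_set)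
  qed
  then have "(\<Union>p::nat. \<Union>N. \<Inter>k\<in>{N..}. {x. norm (\<rho> (dyadic_approx k x) - v) < q - 1/Suc p}) \<in> sets lebesgue"
    by (intro sets.countable_UN'' countableI_type)
  then show ?thesis
    unfolding near_set_eq by (rule sets.Int[OF lebesgue_sets_good_set])
qed

lemma bounded_near_set: "bounded (near_set v q)"
  using bounded_good_set by (rule bounded_subset) (auto simp: near_set_def)

lemma near_set_mono:
  assumes "norm (v - w) + q \<le> q'"
  shows "near_set v q \<subseteq> near_set w q'"
proof
  fix x assume "x \<in> near_set v q"
  then have "x \<in> good_set" "norm (\<rho> (deriv_lim x) - v) < q" by (auto simp: near_set_def)
  moreover have "norm (\<rho> (deriv_lim x) - w) \<le> norm (\<rho> (deriv_lim x) - v) + norm (v - w)"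
    using norm_triangle_ineq[of "\<rho> (deriv_lim x) - v" "v - w"] by simp
  ultimately show "x \<in> near_set w q'"
    using assms by (simp add: near_set_def)
qed

lemma measure_ball_diff_near_set_mono:
  assumes "near_set v q \<subseteq> near_set w q'"
  shows "measure lebesgue (ball x r - near_set w q') \<le> measure lebesgue (ball x r - near_set v q)"
proof (rule measure_mono_fmeasurable)
  show "ball x r - near_set w q' \<subseteq> ball x r - near_set v q"
    using assms by blast
  show "ball x r - near_set w q' \<in> sets lebesgue"
    by (rule fmeasurableD[OF fmeasurable_Diff[OF lmeasurable_ball lebesgue_sets_near_set]])
  show "ball x r - near_set v q \<in> lmeasurable"
    by (rule fmeasurable_Diff[OF lmeasurable_ball lebesgue_sets_near_set])
qed

definition approx_continuous_at :: "real \<Rightarrow> bool" where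
  "approx_continuous_at t0 \<longleftrightarrow> (\<forall>e>0. \<exists>d>0. \<forall>r. 0 < r \<and> r < d \<longrightarrow>
      measure lebesgue (ball t0 r - near_set (\<rho> (deriv_lim t0)) e) < e * (2*r))"

text \<open>Apply the density theorem to the countably many sets \<open>near_set v (1 / Suc n)\<close> with \<open>v\<close> ranging over finite
  \<open>1 / Suc n\<close>-nets of the compact set \<open>\<rho> ` closure (slopes f)\<close>.\<close>

lemma ae_approx_continuous: "\<exists>N. negligible N \<and> (\<forall>t0 \<in> good_set - N. approx_continuous_at t0)"
proof -
  have "compact (\<rho> ` closure (slopes f))"
    by (rule compact_continuous_image[OF continuous_at_imp_continuous_on compact_slopes])
       (use isCont_perturb in auto)
  then have "\<forall>n::nat. \<exists>V. finite V \<and> \<rho> ` closure (slopes f) \<subseteq> (\<Union>v\<in>V. ball v (1/Suc n))"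
    unfolding compact_eq_totally_bounded by simp
  then obtain V where V: "\<And>n. finite (V n)" "\<And>n. \<rho> ` closure (slopes f) \<subseteq> (\<Union>v\<in>V n. ball v (1/Suc n))"
    by metis
  have "\<forall>n v. \<exists>N. negligible N \<and> (\<forall>x \<in> near_set v (1/Suc n) - N. \<forall>e>0. \<exists>d>0. \<forall>r. 0 < r \<and> r < d \<longrightarrow>
           measure lebesgue (ball x r - near_set v (1/Suc n)) < e * (2*r))"
    using lebesgue_density_theorem[OF lebesgue_sets_near_set bounded_near_set] by blast
  then obtain NN where NN: "\<And>n v. negligible (NN n v)"
    "\<And>n v x e. x \<in> near_set v (1/Suc n) - NN n v \<Longrightarrow> e > 0 \<Longrightarrow> \<exists>d>0. \<forall>r. 0 < r \<and> r < d \<longrightarrow>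
           measure lebesgue (ball x r - near_set v (1/Suc n)) < e * (2*r)"
    by metis
  define N where "N = (\<Union>n. \<Union>v\<in>V n. NN n v)"
  have "negligible N"
    unfolding N_def by (intro negligible_Union_nat negligible_Union) (auto simp: V(1) NN(1))
  moreover have "approx_continuous_at t0" if t0: "t0 \<in> good_set - N" for t0
    unfolding approx_continuous_at_def
  proof (intro allI impI)
    fix e :: real assume e: "e > 0"
    obtain n :: nat where n: "1 / Suc n < e/2" using e by (metis half_gt_zero nat_approx_posE)
    have "\<rho> (deriv_lim t0) \<in> \<rho> ` closure (slopes f)"
      using t0 deriv_lim_in_closure_slopes by blast
    then have "\<rho> (deriv_lim t0) \<in> (\<Union>v\<in>V n. ball v (1/Suc n))"
      using V(2)[of n] by (rule subsetD[rotated])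
    then obtain v where v: "v \<in> V n" "dist v (\<rho> (deriv_lim t0)) < 1/Suc n"
      by (auto simp only: mem_ball)
    then have "t0 \<in> near_set v (1/Suc n)"
      using t0 unfolding near_set_def by (simp add: dist_norm norm_minus_commute)
    moreover have "t0 \<notin> NN n v" using t0 v unfolding N_def by blast
    ultimately obtain d where d: "d > 0"
      "\<And>r. 0 < r \<Longrightarrow> r < d \<Longrightarrow> measure lebesgue (ball t0 r - near_set v (1/Suc n)) < e * (2*r)"
      using NN(2)[of t0 v n e] e by blast
    have "norm (v - \<rho> (deriv_lim t0)) + 1/Suc n \<le> e"
      using v(2) n by (simp add: dist_norm)
    then have "measure lebesgue (ball t0 r - near_set (\<rho> (deriv_lim t0)) e) \<le>
        measure lebesgue (ball t0 r - near_set v (1/Suc n))" for r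
      by (intro measure_ball_diff_near_set_mono near_set_mono)
    then have "measure lebesgue (ball t0 r - near_set (\<rho> (deriv_lim t0)) e) < e * (2*r)"
      if "0 < r" "r < d" for r
      using d(2)[OF that] by (meson le_less_trans)
    then show "\<exists>d>0. \<forall>r. 0 < r \<and> r < d \<longrightarrow>
        measure lebesgue (ball t0 r - near_set (\<rho> (deriv_lim t0)) e) < e * (2*r)"
      using d(1) by blast
  qed
  ultimately show ?thesis by blast
qed

lemma integral_norm_perturb_diff_le:
  assumes st: "- real R \<le> s" "s \<le> t" "t \<le> real R" and sub: "{s..t} \<subseteq> ball t0 r"
    and w: "norm w \<le> 1" and e: "e > 0"
  shows "integral {s..t} (\<lambda>x. norm (\<rho> (deriv_lim x) - w)) \<le>
           e * (t - s) + 2 * measure lebesgue (ball t0 r - near_set w e)"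
proof -
  let ?B = "ball t0 r - near_set w e"
  have B: "?B \<in> lmeasurable"
    by (rule fmeasurable_Diff[OF lmeasurable_ball lebesgue_sets_near_set])
  have Bst: "?B \<inter> {s..t} \<in> lmeasurable"
    by (rule fmeasurable_Int_fmeasurable[OF B]) simp
  have "indicat_real ?B integrable_on {s..t}"
    using Bst by (simp add: integrable_on_indicator)
  then have int_B: "(\<lambda>x. 2 * indicat_real ?B x) integrable_on {s..t}"
    using integrable_cmul[of "indicat_real ?B" "{s..t}" 2] by simp
  have "integral {s..t} (\<lambda>x. norm (\<rho> (deriv_lim x) - w)) \<le> integral {s..t} (\<lambda>x. e + 2 * indicat_real ?B x)"
  proof (rule integral_le)
    show "(\<lambda>x. norm (\<rho> (deriv_lim x) - w)) integrable_on {s..t}" by (rule norm_prim_diff_linear_le(1)[OF st])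
    show "(\<lambda>x. e + 2 * indicat_real ?B x) integrable_on {s..t}"
      by (intro integrable_add integrable_const_ivl int_B)
    fix x assume x: "x \<in> {s..t}"
    have "norm (\<rho> (deriv_lim x) - w) \<le> 2"
      using norm_triangle_ineq4[of "\<rho> (deriv_lim x)" w] norm_perturb_le[of "deriv_lim x"] w by linarith
    show "norm (\<rho> (deriv_lim x) - w) \<le> e + 2 * indicat_real ?B x"
    proof (cases "x \<in> near_set w e")
      case True
      then show ?thesis by (simp add: near_set_def)
    next
      case False
      then have "x \<in> ?B" using x sub by blast
      with \<open>norm (\<rho> (deriv_lim x) - w) \<le> 2\<close> show ?thesis using e by simp
    qed
  qed
  also have "\<dots> = e * (t - s) + 2 * measure lebesgue (?B \<inter> {s..t})"
  proof -
    have "integral {s..t} (\<lambda>x. e + 2 * indicat_real ?B x) =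
        integral {s..t} (\<lambda>x. e) + integral {s..t} (\<lambda>x. 2 * indicat_real ?B x)"
      by (rule integral_add[OF integrable_const_ivl int_B])
    also have "integral {s..t} (\<lambda>x. 2 * indicat_real ?B x) = 2 * integral {s..t} (indicat_real ?B)"
      by (rule integral_mult_right)
    also have "integral {s..t} (indicat_real ?B) = measure lebesgue (?B \<inter> {s..t})"
      by (rule integral_indicator[OF Bst])
    finally show ?thesis using st by simp
  qed
  also have "\<dots> \<le> e * (t - s) + 2 * measure lebesgue ?B"
  proof -
    have "measure lebesgue (?B \<inter> {s..t}) \<le> measure lebesgue ?B"
      by (rule measure_mono_fmeasurable[OF _ fmeasurableD[OF Bst] B]) blast
    then show ?thesis by simp
  qed
  finally show ?thesis .
qed

lemma norm_prim_diff_linear_le_near: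
  assumes t0: "- real R < t0" "t0 < real R" and cont: "approx_continuous_at t0" and e: "e > 0"
  shows "\<exists>d>0. \<forall>s t. s \<le> t \<longrightarrow> (t0 = s \<or> t0 = t) \<longrightarrow> t - s < d \<longrightarrow>
           norm ((prim t - prim s) - (t - s) *\<^sub>R \<rho> (deriv_lim t0)) \<le> e * (t - s)"
proof -
  define w where "w = \<rho> (deriv_lim t0)"
  have w: "norm w \<le> 1" unfolding w_def by (rule norm_perturb_le)
  have "e/9 > 0" using e by simp
  then obtain d1 where d1: "d1 > 0"
    "\<And>r. 0 < r \<Longrightarrow> r < d1 \<Longrightarrow> measure lebesgue (ball t0 r - near_set w (e/9)) < e/9 * (2*r)"
    using cont unfolding approx_continuous_at_def w_def by blast
  define d where "d = min (d1/2) (min (real R - t0) (t0 + real R))"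
  have strict: "norm ((prim t - prim s) - (t - s) *\<^sub>R w) \<le> e * (t - s)"
    if st: "s < t" "t0 = s \<or> t0 = t" "t - s < d" for s t
  proof -
    define r where "r = 2 * (t - s)"
    have r: "0 < r" "r < d1" using st unfolding r_def d_def by auto
    have range: "- real R \<le> s" "s \<le> t" "t \<le> real R" using st t0 unfolding d_def by auto
    have sub: "{s..t} \<subseteq> ball t0 r"
      using st(1,2) unfolding r_def by (auto simp: dist_real_def)
    have "norm ((prim t - prim s) - (t - s) *\<^sub>R w) \<le> integral {s..t} (\<lambda>x. norm (\<rho> (deriv_lim x) - w))"
      by (rule norm_prim_diff_linear_le(2)[OF range])
    also have "\<dots> \<le> e/9 * (t - s) + 2 * measure lebesgue (ball t0 r - near_set w (e/9))"
      by (rule integral_norm_perturb_diff_le[OF range sub w \<open>e/9 > 0\<close>])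
    also have "\<dots> \<le> e/9 * (t - s) + 2 * (e/9 * (2 * r))"
      using d1(2)[OF r] by simp
    also have "\<dots> = e * (t - s)" unfolding r_def by (simp add: field_simps)
    finally show ?thesis .
  qed
  have "norm ((prim t - prim s) - (t - s) *\<^sub>R w) \<le> e * (t - s)"
    if "s \<le> t" "t0 = s \<or> t0 = t" "t - s < d" for s t
    using strict[of s t] that by (cases "s = t") simp_all
  moreover have "d > 0" using d1 t0 by (simp add: d_def)
  ultimately show ?thesis
    unfolding w_def by blast
qed

lemma prim_has_vector_derivative:
  assumes t0: "t0 \<in> good_set" "- real R < t0" "t0 < real R" and cont: "approx_continuous_at t0"
  shows "(prim has_vector_derivative \<rho> (deriv_lim t0)) (at t0)"
  unfolding has_vector_derivative_def has_derivative_at_alt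
proof (intro conjI allI impI)
  show "bounded_linear (\<lambda>x. x *\<^sub>R \<rho> (deriv_lim t0))" by (rule bounded_linear_scaleR_left)
  fix e :: real assume "e > 0"
  then obtain d where d: "d > 0" and near: "\<And>s t. s \<le> t \<Longrightarrow> t0 = s \<or> t0 = t \<Longrightarrow> t - s < d \<Longrightarrow>
      norm ((prim t - prim s) - (t - s) *\<^sub>R \<rho> (deriv_lim t0)) \<le> e * (t - s)"
    using norm_prim_diff_linear_le_near[OF t0(2,3) cont] by blast
  have "norm (prim y - prim t0 - (y - t0) *\<^sub>R \<rho> (deriv_lim t0)) \<le> e * norm (y - t0)"
    if y: "norm (y - t0) < d" for y
  proof (cases "t0 \<le> y")
    case True
    then show ?thesis using near[of t0 y] y by simp
  next
    case False
    have "prim y - prim t0 - (y - t0) *\<^sub>R \<rho> (deriv_lim t0) = - ((prim t0 - prim y) - (t0 - y) *\<^sub>R \<rho> (deriv_lim t0))"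
      by (simp add: algebra_simps)
    then have "norm (prim y - prim t0 - (y - t0) *\<^sub>R \<rho> (deriv_lim t0)) =
        norm ((prim t0 - prim y) - (t0 - y) *\<^sub>R \<rho> (deriv_lim t0))"
      by (metis norm_minus_cancel)
    then show ?thesis using near[of y t0] y False by simp
  qed
  then show "\<exists>d>0. \<forall>y. norm (y - t0) < d \<longrightarrow>
      norm (prim y - prim t0 - (y - t0) *\<^sub>R \<rho> (deriv_lim t0)) \<le> e * norm (y - t0)"
    using d by blast
qed

end

section \<open>Lipschitz norms and slopes\<close>

lemma lip_norm_le:
  fixes g :: "real \<Rightarrow> 'a::real_normed_vector"
  assumes "\<And>s t. norm (g s - g t) \<le> L * \<bar>s - t\<bar>"
  shows "lip_norm g \<le> L"
  unfolding lip_norm_def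
proof (rule cSUP_least)
  have "(0::real, 1::real) \<in> {(s, t). s \<noteq> t}" by simp
  then show "{(s, t). s \<noteq> t} \<noteq> ({}::(real \<times> real) set)" by blast
  fix p :: "real \<times> real" assume "p \<in> {(s, t). s \<noteq> t}"
  then have "\<bar>fst p - snd p\<bar> > 0" by auto
  then show "norm (g (fst p) - g (snd p)) / \<bar>fst p - snd p\<bar> \<le> L"
    using assms[of "fst p" "snd p"] by (simp add: divide_le_eq)
qed

lemma slope_le_lip_norm:
  fixes g :: "real \<Rightarrow> 'a::real_normed_vector"
  assumes L: "\<And>s t. norm (g s - g t) \<le> L * \<bar>s - t\<bar>" and st: "s \<noteq> t"
  shows "norm (g s - g t) / \<bar>s - t\<bar> \<le> lip_norm g"
proof -
  have "bdd_above ((\<lambda>p. norm (g (fst p) - g (snd p)) / \<bar>fst p - snd p\<bar>) ` {(s, t). s \<noteq> t})"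
  proof (rule bdd_aboveI2)
    fix p :: "real \<times> real" assume "p \<in> {(s, t). s \<noteq> t}"
    then have "\<bar>fst p - snd p\<bar> > 0" by auto
    then show "norm (g (fst p) - g (snd p)) / \<bar>fst p - snd p\<bar> \<le> L"
      using L[of "fst p" "snd p"] by (simp add: divide_le_eq)
  qed
  from cSUP_upper[OF _ this, of "(s,t)"] st show ?thesis
    unfolding lip_norm_def by simp
qed

lemma Lip0_norm_diff_le:
  fixes g :: "real \<Rightarrow> 'a::real_normed_vector"
  assumes "g \<in> Lip0"
  shows "norm (g s - g t) \<le> lip_norm g * \<bar>s - t\<bar>"
proof (cases "s = t")
  case False
  obtain L where "lipschitz_on L UNIV g" using assms by (auto simp: Lip0_def)
  then have "norm (g s - g t) \<le> L * \<bar>s - t\<bar>" for s t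
    using lipschitz_onD[of L UNIV g s t] by (simp add: dist_norm dist_real_def)
  from slope_le_lip_norm[OF this False] False show ?thesis
    by (simp add: divide_le_eq)
qed simp

lemma norm_vector_derivative_le_lip_norm:
  fixes g :: "real \<Rightarrow> 'a::real_normed_vector"
  assumes L: "\<And>s t. norm (g s - g t) \<le> L * \<bar>s - t\<bar>" and d: "(g has_vector_derivative v) (at t0)"
  shows "norm v \<le> lip_norm g"
proof (rule field_le_epsilon)
  fix e :: real assume e: "e > 0"
  then obtain d where d: "d > 0"
    "\<And>y. norm (y - t0) < d \<Longrightarrow> norm (g y - g t0 - (y - t0) *\<^sub>R v) \<le> e * norm (y - t0)"
    using d unfolding has_vector_derivative_def has_derivative_at_alt by blast
  define y where "y = t0 + d/2"
  have y: "y - t0 = d/2" "norm (y - t0) < d" using d by (auto simp: y_def)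
  have "norm ((y - t0) *\<^sub>R v) \<le> norm (g y - g t0) + norm (g y - g t0 - (y - t0) *\<^sub>R v)"
    by (metis norm_minus_commute norm_triangle_sub add.commute)
  then have "(d/2) * norm v \<le> norm (g y - g t0) + e * (d/2)"
    using d(2)[OF y(2)] y(1) d(1) by simp
  moreover have "norm (g y - g t0) / \<bar>y - t0\<bar> \<le> lip_norm g"
    by (rule slope_le_lip_norm[OF L]) (use y d in auto)
  ultimately have "(d/2) * norm v \<le> (d/2) * (lip_norm g + e)"
    using y d(1) by (simp add: divide_le_eq algebra_simps)
  then show "norm v \<le> lip_norm g + e" using d(1) by simp
qed

lemma slope_in_convex_if_split:
  fixes h :: "real \<Rightarrow> 'a::real_normed_vector"
  assumes Q: "convex Q" and m: "s < m" "m < t"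
    and left: "(1/(m-s)) *\<^sub>R (h m - h s) \<in> Q" and right: "(1/(t-m)) *\<^sub>R (h t - h m) \<in> Q"
  shows "(1/(t-s)) *\<^sub>R (h t - h s) \<in> Q"
  using convex_average_split[OF Q m left right] by simp

lemma slopes_in_convex_if_piecewise:
  fixes h :: "real \<Rightarrow> 'a::real_normed_vector"
  assumes Q: "convex Q" and ab: "a \<le> b"
    and pieces: "\<And>s t. s < t \<Longrightarrow> t \<le> a \<or> (a \<le> s \<and> t \<le> b) \<or> b \<le> s \<Longrightarrow> (1/(t-s)) *\<^sub>R (h t - h s) \<in> Q"
    and st: "s < t"
  shows "(1/(t-s)) *\<^sub>R (h t - h s) \<in> Q"
proof -
  have right: "(1/(t-s)) *\<^sub>R (h t - h s) \<in> Q" if "a \<le> s" "s < t" for s t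
  proof (cases "t \<le> b \<or> b \<le> s")
    case True
    then show ?thesis using pieces that by blast
  next
    case False
    then have "s < b" "b < t" by auto
    then show ?thesis
      using slope_in_convex_if_split[OF Q \<open>s < b\<close> \<open>b < t\<close>] pieces[of s b] pieces[of b t] that by auto
  qed
  show ?thesis
  proof (cases "a \<le> s \<or> t \<le> a")
    case True
    then show ?thesis using right pieces st by blast
  next
    case False
    then have "s < a" "a < t" by auto
    then show ?thesis
      using slope_in_convex_if_split[OF Q \<open>s < a\<close> \<open>a < t\<close>] pieces[of s a] right[of a t] by auto
  qed
qed

lemma convex_hull_near_convex_hull:
  fixes C N :: "'a::real_normed_vector set"
  assumes N: "C \<subseteq> (\<Union>x\<in>N. ball x e)" and y: "y \<in> convex hull C"
  shows "\<exists>z \<in> convex hull N. dist y z \<le> e"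
proof -
  obtain S u where S: "finite S" "S \<subseteq> C" "\<forall>x\<in>S. 0 \<le> u x" "sum u S = 1" "(\<Sum>v\<in>S. u v *\<^sub>R v) = y"
    using y unfolding convex_hull_explicit by blast
  have "\<forall>c\<in>S. \<exists>n\<in>N. dist n c < e" using S(2) N by fastforce
  then obtain nn where nn: "\<And>c. c \<in> S \<Longrightarrow> nn c \<in> N \<and> dist (nn c) c < e" by metis
  define z where "z = (\<Sum>v\<in>S. u v *\<^sub>R nn v)"
  have z: "z \<in> convex hull N"
    unfolding z_def by (rule convex_sum[OF S(1) convex_convex_hull S(4)]) (use S(3) nn in \<open>auto intro: hull_inc\<close>)
  have "dist y z = norm (\<Sum>v\<in>S. u v *\<^sub>R (v - nn v))"
    unfolding z_def S(5)[symmetric] dist_norm by (simp add: sum_subtractf scaleR_diff_right)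
  also have "\<dots> \<le> (\<Sum>v\<in>S. u v * norm (v - nn v))"
    using norm_sum[of "\<lambda>v. u v *\<^sub>R (v - nn v)" S] S(3) by simp
  also have "\<dots> \<le> (\<Sum>v\<in>S. u v * e)"
  proof (rule sum_mono)
    fix v assume v: "v \<in> S"
    have "norm (v - nn v) \<le> e" using nn[OF v] by (simp add: dist_norm norm_minus_commute)
    moreover have "0 \<le> u v" using S(3) v by blast
    ultimately show "u v * norm (v - nn v) \<le> u v * e" by (rule mult_left_mono)
  qed
  also have "\<dots> = e" using S(4) by (simp flip: sum_distrib_right)
  finally show ?thesis using z by blast
qed

lemma compact_closure_convex_hull:
  fixes C :: "'a::banach set"
  assumes C: "compact C"
  shows "compact (closure (convex hull C))"
  unfolding compact_eq_totally_bounded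
proof (intro conjI allI impI)
  show "complete (closure (convex hull C))" by (simp add: complete_eq_closed)
  fix e :: real assume e: "e > 0"
  obtain N where N: "finite N" "C \<subseteq> (\<Union>x\<in>N. ball x (e/4))"
    using C e unfolding compact_eq_totally_bounded by (meson divide_pos_pos zero_less_numeral)
  have "compact (convex hull N)" by (rule finite_imp_compact_convex_hull[OF N(1)])
  then obtain M where M: "finite M" "convex hull N \<subseteq> (\<Union>x\<in>M. ball x (e/4))"
    using e unfolding compact_eq_totally_bounded by (meson divide_pos_pos zero_less_numeral)
  have "closure (convex hull C) \<subseteq> (\<Union>x\<in>M. ball x e)"
  proof
    fix y assume "y \<in> closure (convex hull C)"
    then have "\<forall>e>0. \<exists>y'\<in>convex hull C. dist y' y < e" by (simp add: closure_approachable)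
    then obtain y' where y': "y' \<in> convex hull C" "dist y' y < e/4"
      using e by (meson divide_pos_pos zero_less_numeral)
    obtain z where z: "z \<in> convex hull N" "dist y' z \<le> e/4"
      using convex_hull_near_convex_hull[OF N(2) y'(1)] by blast
    have "z \<in> (\<Union>x\<in>M. ball x (e/4))" using M(2) z(1) by (rule subsetD)
    then obtain m where m: "m \<in> M" "dist m z < e/4" by (auto simp only: mem_ball)
    have "dist y m \<le> dist y y' + dist y' z + dist z m"
      using dist_triangle[of y m y'] dist_triangle[of y' m z] by linarith
    then have "dist m y < e"
      using e y'(2) z(2) m(2) dist_commute[of m z] dist_commute[of y y'] dist_commute[of y m] by linarith
    then show "y \<in> (\<Union>x\<in>M. ball x e)" using m(1) by auto
  qed
  then show "\<exists>k. finite k \<and> closure (convex hull C) \<subseteq> (\<Union>x\<in>k. ball x e)" using M(1) by blast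
qed

lemma slope_commute: "(g s - g t) /\<^sub>R (s - t) = (1/(t-s)) *\<^sub>R (g t - (g s :: 'a::real_normed_vector))"
proof -
  have "s - t = -(t - s)" "g s - g t = -(g t - g s)" by simp_all
  then show ?thesis by (simp only: inverse_minus_eq scaleR_minus_left scaleR_minus_right minus_minus
      inverse_eq_divide divide_minus_right)
qed

section \<open>The approximating map\<close>

definition radial_stretch :: "real \<Rightarrow> 'a::real_normed_vector \<Rightarrow> 'a" where
  "radial_stretch \<beta> v = min (1/\<beta>) (1/norm v) *\<^sub>R v"

lemma norm_radial_stretch_le_1: "0 < \<beta> \<Longrightarrow> norm (radial_stretch \<beta> v) \<le> 1"
  by (cases "v = 0") (auto simp: radial_stretch_def min_def field_simps)

lemma norm_radial_stretch_eq_1: "0 < \<beta> \<Longrightarrow> \<beta> \<le> norm v \<Longrightarrow> norm (radial_stretch \<beta> v) = 1"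
  by (auto simp: radial_stretch_def min_def field_simps)

lemma isCont_radial_stretch:
  assumes "0 < \<beta>"
  shows "isCont (radial_stretch \<beta>) v"
proof (cases "v = 0")
  case True
  have bound: "\<forall>w. norm (radial_stretch \<beta> w) \<le> (1/\<beta>) * norm w"
  proof
    fix w
    have "norm (radial_stretch \<beta> w) = min (1/\<beta>) (1/norm w) * norm w"
      using assms by (simp add: radial_stretch_def)
    also have "\<dots> \<le> (1/\<beta>) * norm w" by (rule mult_right_mono) auto
    finally show "norm (radial_stretch \<beta> w) \<le> (1/\<beta>) * norm w" .
  qed
  have "((\<lambda>w. (1/\<beta>) * norm w) \<longlongrightarrow> 0) (at (0::'a))"
    using tendsto_mult_right_zero[OF tendsto_norm_zero[OF tendsto_ident_at], of "1/\<beta>"] by simp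
  then have "(radial_stretch \<beta> \<longlongrightarrow> 0) (at (0::'a))"
    by (rule Lim_null_comparison[OF always_eventually[OF bound]])
  then show ?thesis using True by (simp add: isCont_def radial_stretch_def)
next
  case False
  then show ?thesis unfolding radial_stretch_def by (intro continuous_intros) auto
qed

lemma norm_diff_radial_stretch_le:
  assumes \<beta>: "0 < \<beta>" "\<beta> \<le> 1" and v: "norm v \<le> 1"
  shows "norm (v - radial_stretch \<beta> v) \<le> 1 - \<beta>"
proof (cases "v = 0")
  case False
  define m where "m = min (1/\<beta>) (1/norm v)"
  have nv: "norm v > 0" using False by simp
  have "1 \<le> 1/\<beta>" "1 \<le> 1/norm v" using \<beta> v nv by (simp_all add: field_simps)
  then have m1: "m \<ge> 1" by (simp add: m_def)
  have "v - radial_stretch \<beta> v = (1 - m) *\<^sub>R v" by (simp add: radial_stretch_def m_def algebra_simps)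
  then have "norm (v - radial_stretch \<beta> v) = (m - 1) * norm v" using m1 by simp
  also have "\<dots> \<le> 1 - \<beta>"
  proof (cases "norm v \<le> \<beta>")
    case True
    have "(m - 1) * norm v \<le> (1/\<beta> - 1) * \<beta>"
      using True m1 nv \<beta> by (intro mult_mono) (auto simp: m_def field_simps)
    also have "\<dots> = 1 - \<beta>" using \<beta> by (simp add: field_simps)
    finally show ?thesis .
  next
    case False
    then have "m = 1/norm v" unfolding m_def using \<beta> nv by (simp add: min_def field_simps)
    then show ?thesis using False nv by (simp add: field_simps)
  qed
  finally show ?thesis .
qed (use \<beta> in \<open>simp add: radial_stretch_def\<close>)

lemma radial_stretch_1_eq: "norm v \<le> 1 \<Longrightarrow> radial_stretch 1 v = v"
  using norm_diff_radial_stretch_le[of 1 v] by simp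

definition sphere_push :: "'a \<Rightarrow> 'a::real_normed_vector \<Rightarrow> 'a" where
  "sphere_push u v = radial_stretch 1 v + (1 - norm (radial_stretch 1 v)) *\<^sub>R u"

lemma isCont_sphere_push: "isCont (sphere_push u) v"
  unfolding sphere_push_def by (intro continuous_intros isCont_radial_stretch; simp)

lemma norm_sphere_push_le_1:
  assumes "norm u = 1"
  shows "norm (sphere_push u v) \<le> 1"
proof -
  have "norm (sphere_push u v) \<le> norm (radial_stretch 1 v) + (1 - norm (radial_stretch 1 v))"
    unfolding sphere_push_def using norm_triangle_ineq norm_radial_stretch_le_1[of 1 v] assms
    by (metis abs_of_nonneg diff_ge_0_iff_ge mult.right_neutral norm_scaleR zero_less_one)
  then show ?thesis by simp
qed

lemma norm_diff_sphere_push_le: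
  assumes "norm u = 1" "norm v \<le> 1"
  shows "norm (v - sphere_push u v) \<le> 1"
  using assms by (simp add: sphere_push_def radial_stretch_1_eq)

lemma sphere_push_0: "sphere_push u 0 = u"
  by (simp add: sphere_push_def radial_stretch_def)

definition clamp :: "real \<Rightarrow> real \<Rightarrow> real" where
  "clamp R t = max (- R) (min R t)"

lemma clamp_eq: "t \<in> {- R..R} \<Longrightarrow> clamp R t = t"
  and clamp_bounds: "0 \<le> R \<Longrightarrow> - R \<le> clamp R t" "0 \<le> R \<Longrightarrow> clamp R t \<le> R"
  and abs_clamp_diff_le: "\<bar>clamp R s - clamp R t\<bar> \<le> \<bar>s - t\<bar>"
  by (auto simp: clamp_def)

context perturbed_derivative
begin

definition glued :: "real \<Rightarrow> 'a" where
  "glued t = prim (clamp (real R) t) - prim 0 + (f t - f (clamp (real R) t))"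

lemma glued_0: "glued 0 = 0"
  by (simp add: glued_def clamp_eq)

lemma glued_slope_in:
  assumes "s < t"
  shows "(1/(t-s)) *\<^sub>R (glued t - glued s) \<in>
           cball 0 1 \<inter> closure (convex hull (closure (slopes f) \<union> \<rho> ` closure (slopes f)))"
    (is "_ \<in> ?Q")
proof (rule slopes_in_convex_if_piecewise[of ?Q "- real R" "real R", OF _ _ _ assms])
  show "convex ?Q" by (intro convex_Int convex_cball convex_closure convex_convex_hull)
  fix s t :: real assume st: "s < t" and pieces: "t \<le> - real R \<or> (- real R \<le> s \<and> t \<le> real R) \<or> real R \<le> s"
  have hull: "closure (slopes f) \<union> \<rho> ` closure (slopes f) \<subseteq>
      closure (convex hull (closure (slopes f) \<union> \<rho> ` closure (slopes f)))"
    using closure_subset hull_subset by (metis subset_trans)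
  show "(1/(t-s)) *\<^sub>R (glued t - glued s) \<in> ?Q"
  proof (cases "t \<le> - real R \<or> real R \<le> s")
    case True
    then have "clamp (real R) s = clamp (real R) t"
      using st R_pos by (auto simp: clamp_def)
    then have "glued t - glued s = f t - f s"
      by (simp add: glued_def)
    moreover have "(f t - f s) /\<^sub>R (t - s) \<in> slopes f"
      unfolding slopes_def using st by auto
    then have "(1/(t-s)) *\<^sub>R (f t - f s) \<in> slopes f"
      by (simp add: inverse_eq_divide)
    moreover have "norm ((1/(t-s)) *\<^sub>R (f t - f s)) \<le> 1"
      using lip1[of t s] st by (simp add: divide_le_eq)
    ultimately show ?thesis using hull closure_subset by auto
  next
    case False
    then have range: "- real R \<le> s" "t \<le> real R" using pieces by auto
    then have "glued t - glued s = prim t - prim s"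
      using st by (simp add: glued_def clamp_eq)
    moreover have "(1/(t-s)) *\<^sub>R (prim t - prim s) \<in> closure (convex hull (\<rho> ` slopes f))"
      by (rule prim_slope_in_closure_convex_hull[OF range(1) st range(2)])
    moreover have "closure (convex hull (\<rho> ` slopes f)) \<subseteq>
        closure (convex hull (closure (slopes f) \<union> \<rho> ` closure (slopes f)))"
      by (intro closure_mono hull_mono) (use closure_subset in blast)
    moreover have "norm ((1/(t-s)) *\<^sub>R (prim t - prim s)) \<le> 1"
      using norm_prim_diff_le[OF range(1) less_imp_le[OF st] range(2)] st by (simp add: divide_le_eq)
    ultimately show ?thesis by auto
  qed
qed auto

lemma norm_glued_diff_le: "norm (glued s - glued t) \<le> 1 * \<bar>s - t\<bar>"
proof -
  have *: "norm (glued t - glued s) \<le> t - s" if "s < t" for s t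
    using glued_slope_in[OF that] that by (simp add: divide_le_eq)
  show ?thesis
    using *[of s t] *[of t s] by (cases s t rule: linorder_cases) (auto simp: norm_minus_commute)
qed

lemma compact_closure_slopes_glued: "compact (closure (slopes glued))"
proof -
  let ?H = "closure (convex hull (closure (slopes f) \<union> \<rho> ` closure (slopes f)))"
  have compact_H: "compact ?H"
    by (intro compact_closure_convex_hull compact_Un compact_slopes compact_continuous_image
        continuous_at_imp_continuous_on) (use isCont_perturb in auto)
  have "slopes glued \<subseteq> ?H"
  proof
    fix y assume "y \<in> slopes glued"
    then obtain s t where st: "s \<noteq> t" "y = (glued s - glued t) /\<^sub>R (s - t)" unfolding slopes_def by blast
    show "y \<in> ?H"
    proof (cases "s < t")
      case True
      then show ?thesis using glued_slope_in[OF True] st(2) slope_commute[where g=glued and s=s and t=t] by simp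
    next
      case False
      then show ?thesis using glued_slope_in[of t s] st by (simp add: inverse_eq_divide)
    qed
  qed
  then have "closure (slopes glued) \<subseteq> ?H"
    by (rule closure_minimal) (use compact_H compact_imp_closed in auto)
  then show ?thesis
    using compact_Int_closed[OF compact_H closed_closure, of "slopes glued"] by (simp add: Int_absorb1)
qed

lemma glued_in_Lip0K: "glued \<in> Lip0K"
  unfolding Lip0K_def Lip0_def
proof (intro CollectI conjI exI)
  show "lipschitz_on 1 UNIV glued"
    by (rule lipschitz_onI) (use norm_glued_diff_le in \<open>auto simp: dist_norm\<close>)
qed (use glued_0 compact_closure_slopes_glued in auto)

lemma glued_has_vector_derivative:
  assumes t0: "t0 \<in> good_set" "- real R < t0" "t0 < real R" and cont: "approx_continuous_at t0"
  shows "(glued has_vector_derivative \<rho> (deriv_lim t0)) (at t0)"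
proof (rule has_vector_derivative_transform_within_open[of "\<lambda>y. prim y - prim 0" _ _ "{- real R<..<real R}"])
  show "((\<lambda>y. prim y - prim 0) has_vector_derivative \<rho> (deriv_lim t0)) (at t0)"
    using prim_has_vector_derivative[OF assms] by (auto intro: derivative_eq_intros)
  show "prim y - prim 0 = glued y" if "y \<in> {- real R<..<real R}" for y
    using that by (simp add: glued_def clamp_eq)
qed (use t0 in auto)

lemma lip_norm_diff_glued_le: "lip_norm (\<lambda>x. f x - glued x) \<le> \<kappa>"
proof (rule lip_norm_le)
  fix s t
  have one_sided: "norm ((f s - prim s) - (f t - prim t)) \<le> \<kappa> * \<bar>s - t\<bar>"
    if "- real R \<le> s" "s \<le> t" "t \<le> real R" for s t
    using norm_diff_f_prim_le[OF that] that
    by (simp add: norm_minus_commute algebra_simps)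
  have "norm ((f (clamp (real R) s) - prim (clamp (real R) s)) - (f (clamp (real R) t) - prim (clamp (real R) t))) \<le>
      \<kappa> * \<bar>clamp (real R) s - clamp (real R) t\<bar>"
    using one_sided[of "clamp (real R) s" "clamp (real R) t"] one_sided[of "clamp (real R) t" "clamp (real R) s"] clamp_bounds[of "real R"]
    by (cases "clamp (real R) s \<le> clamp (real R) t") (auto simp: norm_minus_commute abs_minus_commute algebra_simps)
  also have "\<dots> \<le> \<kappa> * \<bar>s - t\<bar>"
    by (rule mult_left_mono[OF abs_clamp_diff_le kappa_nonneg])
  finally show "norm ((f s - glued s) - (f t - glued t)) \<le> \<kappa> * \<bar>s - t\<bar>"
    by (simp add: glued_def algebra_simps)
qed

lemma exists_Lip0K_approximant:
  assumes t: "- real R < t1" "t2 < real R" "t0 \<in> {t1..t2}"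
    and t0: "t0 \<in> good_set" "approx_continuous_at t0"
    and sphere: "norm (\<rho> (deriv_lim t0)) = 1" and \<kappa>: "\<kappa> < \<epsilon>"
  shows "\<exists>g \<in> Lip0K. lip_norm g = 1 \<and>
           (\<exists>t0 \<in> {t1..t2}. \<exists>v. (g has_vector_derivative v) (at t0) \<and> norm v = 1) \<and>
           lip_norm (\<lambda>x. f x - g x) < \<epsilon>"
proof (intro bexI[of _ glued] conjI)
  have deriv: "(glued has_vector_derivative \<rho> (deriv_lim t0)) (at t0)"
    by (rule glued_has_vector_derivative) (use t t0 in auto)
  then show "\<exists>t0 \<in> {t1..t2}. \<exists>v. (glued has_vector_derivative v) (at t0) \<and> norm v = 1"
    using t(3) sphere by blast
  show "lip_norm glued = 1"
    using lip_norm_le[OF norm_glued_diff_le] norm_vector_derivative_le_lip_norm[OF norm_glued_diff_le deriv]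
      sphere by simp
  show "lip_norm (\<lambda>x. f x - glued x) < \<epsilon>"
    using lip_norm_diff_glued_le \<kappa> by simp
qed (rule glued_in_Lip0K)

end

context dyadic_derivative
begin

lemma approximant_if_large_derivative:
  assumes t: "- real R < t1" "t2 < real R"
    and \<beta>: "0 < \<beta>" "\<beta> < 1" "1 - \<beta> < \<epsilon>"
    and large: "\<not> negligible {x \<in> {t1..t2} \<inter> good_set. \<beta> \<le> norm (deriv_lim x)}"
  shows "\<exists>g \<in> Lip0K. lip_norm g = 1 \<and>
           (\<exists>t0 \<in> {t1..t2}. \<exists>v. (g has_vector_derivative v) (at t0) \<and> norm v = 1) \<and>
           lip_norm (\<lambda>x. f x - g x) < \<epsilon>"
proof -
  interpret perturbed_derivative f R "radial_stretch \<beta>" "1 - \<beta>"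
  proof unfold_locales
    show "isCont (radial_stretch \<beta>) y" for y by (rule isCont_radial_stretch[OF \<beta>(1)])
    show "norm (radial_stretch \<beta> v) \<le> 1" for v by (rule norm_radial_stretch_le_1[OF \<beta>(1)])
    show "norm (v - radial_stretch \<beta> v) \<le> 1 - \<beta>" if "norm v \<le> 1" for v
      using \<beta> that by (intro norm_diff_radial_stretch_le) auto
  qed
  obtain N where N: "negligible N" "\<And>t0. t0 \<in> good_set - N \<Longrightarrow> approx_continuous_at t0"
    using ae_approx_continuous by blast
  have "\<not> {x \<in> {t1..t2} \<inter> good_set. \<beta> \<le> norm (deriv_lim x)} \<subseteq> N"
    using large N(1) negligible_subset by blast
  then obtain t0 where t0: "t0 \<in> {t1..t2}" "t0 \<in> good_set" "\<beta> \<le> norm (deriv_lim t0)" "t0 \<notin> N"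
    by blast
  have "norm (radial_stretch \<beta> (deriv_lim t0)) = 1"
    by (rule norm_radial_stretch_eq_1[OF \<beta>(1) t0(3)])
  moreover have "approx_continuous_at t0" using N(2) t0 by blast
  ultimately show ?thesis
    using exists_Lip0K_approximant[OF t t0(1,2)] \<beta>(3) by blast
qed

lemma approximant_if_vanishing_derivative:
  assumes t: "- real R < t1" "t2 < real R" "t1 < t2"
    and \<epsilon>: "1 < \<epsilon>" and nonconst: "f a \<noteq> f b"
    and vanishing: "negligible {x \<in> {t1..t2} \<inter> good_set. deriv_lim x \<noteq> 0}"
  shows "\<exists>g \<in> Lip0K. lip_norm g = 1 \<and>
           (\<exists>t0 \<in> {t1..t2}. \<exists>v. (g has_vector_derivative v) (at t0) \<and> norm v = 1) \<and>
           lip_norm (\<lambda>x. f x - g x) < \<epsilon>"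
proof -
  define u where "u = (1/norm (f a - f b)) *\<^sub>R (f a - f b)"
  have u: "norm u = 1" using nonconst by (simp add: u_def)
  interpret perturbed_derivative f R "sphere_push u" 1
  proof unfold_locales
    show "isCont (sphere_push u) y" for y by (rule isCont_sphere_push)
    show "norm (sphere_push u v) \<le> 1" for v by (rule norm_sphere_push_le_1[OF u])
    show "norm (v - sphere_push u v) \<le> 1" if "norm v \<le> 1" for v
      by (rule norm_diff_sphere_push_le[OF u that])
  qed
  obtain N where N: "negligible N" "\<And>t0. t0 \<in> good_set - N \<Longrightarrow> approx_continuous_at t0"
    using ae_approx_continuous by blast
  have "\<not> negligible {t1..t2}"
    using negligible_interval(1)[of t1 t2] t(3) by (simp add: box_real)
  moreover have "negligible (({- real R..real R} - good_set) \<union> {x \<in> {t1..t2} \<inter> good_set. deriv_lim x \<noteq> 0} \<union> N)"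
    using negligible_outside_good_set vanishing N(1) by (intro negligible_Un)
  ultimately obtain t0 where "t0 \<in> {t1..t2}"
    "t0 \<notin> ({- real R..real R} - good_set) \<union> {x \<in> {t1..t2} \<inter> good_set. deriv_lim x \<noteq> 0} \<union> N"
    using negligible_subset by blast
  moreover have "{t1..t2} \<subseteq> {- real R..real R}" using t by auto
  ultimately have t0: "t0 \<in> {t1..t2}" "t0 \<in> good_set - N" "deriv_lim t0 = 0" by auto
  have "norm (sphere_push u (deriv_lim t0)) = 1"
    using u t0(3) by (simp add: sphere_push_0)
  then show ?thesis
    using exists_Lip0K_approximant[OF t(1,2) t0(1) _ N(2)[OF t0(2)] _ \<epsilon>] t0(2) by blast
qed

lemma norm_diff_le_if_negligible_large_derivative:
  assumes t: "- real R \<le> t1" "t1 \<le> t2" "t2 \<le> real R" and \<beta>: "0 \<le> \<beta>"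
    and small: "negligible {x \<in> {t1..t2} \<inter> good_set. \<beta> \<le> norm (deriv_lim x)}"
  shows "norm (f t2 - f t1) \<le> \<beta> * (t2 - t1)"
proof -
  define Z where "Z = {x \<in> {t1..t2} \<inter> good_set. \<beta> \<le> norm (deriv_lim x)} \<union> ({- real R..real R} - good_set)"
  have Z: "negligible Z" unfolding Z_def using small negligible_outside_good_set by (rule negligible_Un)
  have "norm (f t2 - f t1) \<le> integral {t1..t2} (\<lambda>x. norm (deriv_lim x))"
    by (rule norm_diff_le_integral_norm_deriv_lim(2)[OF t])
  also have "\<dots> = integral {t1..t2} (\<lambda>x. if x \<in> Z then 0 else norm (deriv_lim x))"
    by (rule integral_spike[OF Z]) simp
  also have "\<dots> \<le> integral {t1..t2} (\<lambda>x. \<beta>)"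
  proof (rule integral_le)
    show "(\<lambda>x. if x \<in> Z then 0 else norm (deriv_lim x)) integrable_on {t1..t2}"
      by (rule integrable_spike[OF norm_diff_le_integral_norm_deriv_lim(1)[OF t] Z]) simp
    show "(if x \<in> Z then 0 else norm (deriv_lim x)) \<le> \<beta>" if "x \<in> {t1..t2}" for x
      using that t \<beta> norm_deriv_lim_le[of x] by (auto simp: Z_def)
  qed (rule integrable_const_ivl)
  finally show ?thesis using t by (simp add: mult.commute)
qed

lemma vanishing_derivative_if_no_large_derivative:
  assumes t: "- real R \<le> t1" "t1 < t2" "t2 \<le> real R"
    and slope: "norm (f t1 - f t2) / \<bar>t1 - t2\<bar> > 1 - \<epsilon>"
    and small: "\<And>\<beta>. max 0 (1-\<epsilon>) < \<beta> \<Longrightarrow> \<beta> < 1 \<Longrightarrow>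
                 negligible {x \<in> {t1..t2} \<inter> good_set. \<beta> \<le> norm (deriv_lim x)}"
  shows "1 < \<epsilon>" and "negligible {x \<in> {t1..t2} \<inter> good_set. deriv_lim x \<noteq> 0}"
proof -
  define s0 where "s0 = norm (f t2 - f t1) / (t2 - t1)"
  have "\<bar>t1 - t2\<bar> = t2 - t1" "norm (f t1 - f t2) = norm (f t2 - f t1)"
    using t by (simp_all add: norm_minus_commute)
  then have s0: "1 - \<epsilon> < s0" "s0 \<le> 1"
    using slope lip1[of t2 t1] t by (simp_all add: s0_def divide_le_eq)
  show "1 < \<epsilon>"
  proof (rule ccontr)
    assume "\<not> 1 < \<epsilon>"
    define \<beta> where "\<beta> = (1 - \<epsilon> + s0) / 2"
    have \<beta>: "max 0 (1-\<epsilon>) < \<beta>" "\<beta> < 1" "\<beta> < s0"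
      using \<open>\<not> 1 < \<epsilon>\<close> s0 unfolding \<beta>_def by auto
    have "s0 * (t2 - t1) \<le> \<beta> * (t2 - t1)"
      using norm_diff_le_if_negligible_large_derivative[OF t(1) less_imp_le[OF t(2)] t(3) _ small[OF \<beta>(1,2)]] \<beta>(1) t
      by (simp add: s0_def)
    then show False using \<beta>(3) t(2) by simp
  qed
  let ?large = "\<lambda>n::nat. {x \<in> {t1..t2} \<inter> good_set. 1 / Suc (Suc n) \<le> norm (deriv_lim x)}"
  have "{x \<in> {t1..t2} \<inter> good_set. deriv_lim x \<noteq> 0} \<subseteq> (\<Union>n. ?large n)"
  proof
    fix x assume x: "x \<in> {x \<in> {t1..t2} \<inter> good_set. deriv_lim x \<noteq> 0}"
    then have "norm (deriv_lim x) > 0" by simp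
    then obtain n where n: "1 / real (Suc n) < norm (deriv_lim x)" by (rule nat_approx_posE)
    have "1 / real (Suc (Suc n)) \<le> 1 / real (Suc n)" by (simp add: frac_le)
    then have "x \<in> ?large n" using x n by simp
    then show "x \<in> (\<Union>n. ?large n)" by blast
  qed
  moreover have "negligible (?large n)" for n
  proof (rule small)
    show "max 0 (1 - \<epsilon>) < 1 / real (Suc (Suc n))" using \<open>1 < \<epsilon>\<close> by simp
    show "1 / real (Suc (Suc n)) < 1" by simp
  qed
  then have "negligible (\<Union>n. ?large n)" by (rule negligible_Union_nat)
  ultimately show "negligible {x \<in> {t1..t2} \<inter> good_set. deriv_lim x \<noteq> 0}"
    by (rule negligible_subset[rotated])
qed

end

theorem proposition4p8:
  fixes \<epsilon> :: real and f :: "real \<Rightarrow> 'a::banach" and t1 t2 :: real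
  assumes "\<epsilon> > 0"
    and "f \<in> Lip0K" and "lip_norm f = 1"
    and "t1 < t2"
    and "norm (f t1 - f t2) / \<bar>t1 - t2\<bar> > 1 - \<epsilon>"
  shows "\<exists>g \<in> Lip0K. lip_norm g = 1 \<and>
           (\<exists>t0 \<in> {t1..t2}. \<exists>v. (g has_vector_derivative v) (at t0) \<and> norm v = 1) \<and>
           lip_norm (\<lambda>x. f x - g x) < \<epsilon>"
proof -
  have f: "f \<in> Lip0" "compact (closure (slopes f))" using assms(2) by (auto simp: Lip0K_def)
  have lip1: "norm (f s - f t) \<le> \<bar>s - t\<bar>" for s t
    using Lip0_norm_diff_le[OF f(1)] assms(3) by simp
  define R where "R = nat \<lceil>max \<bar>t1\<bar> \<bar>t2\<bar>\<rceil> + 1"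
  have R: "R > 0" "- real R < t1" "t2 < real R"
    unfolding R_def by linarith+
  interpret dyadic_derivative f R
    using lip1 R f by unfold_locales
  show ?thesis
  proof (cases "\<exists>\<beta>. max 0 (1-\<epsilon>) < \<beta> \<and> \<beta> < 1 \<and> \<not> negligible {x \<in> {t1..t2} \<inter> good_set. \<beta> \<le> norm (deriv_lim x)}")
    case True
    then show ?thesis
      using approximant_if_large_derivative[OF R(2,3)] by auto
  next
    case False
    have "- real R \<le> t1" "t2 \<le> real R" using R by auto
    note vanishing = vanishing_derivative_if_no_large_derivative[OF this(1) assms(4) this(2) assms(5)]
    obtain a b where "f a \<noteq> f b"
      using lip_norm_le[of f 0] assms(3) by force
    then show ?thesis
      using approximant_if_vanishing_derivative[OF R(2,3) assms(4)] vanishing False by blast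
  qed
qed

end
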